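(* Let $G$ be a finite simple graph with $V(G)=\{1,\dots,n\}$, edge weight function $w$ and vertex weight function $w_1$. Let $\Gamma(c)$ be the set of all nonempty subgraphs of $G$ that are disjoint unions of cycles (each of length at least $3$). Then $$\phi_{(w,w_1)}(G,x)=\eta_{(w,w_1)}(G,x)+\sum_{C\in\Gamma(c)}(-1)^{\mathrm{comp}(C)}w_2(C)\,\eta_{(w,w_1)}(G\setminus C,x).$$ In particular $\phi_{(w,w_1)}(G,x)$ has real coefficients.
   Context: An edge weight function $w$ assigns a nonzero complex number to each edge; a vertex weight function $w_1$ assigns a real number (possibly $0$) to each vertex; subgraphs carry restricted weights. $G\setminus C$ deletes all vertices of $C$ (and incident edges). For $A\subseteq E(G)$, $w(A)=\prod_{e\in A}w(e)$. $\mu_w(G,x)=\sum_{M}(-1)^{|M|}|w(M)|^2x^{n-2|M|}$ over all matchings $M$ (including empty). $\eta_{(w,w_1)}(G,x)=\sum_{S\subseteq V(G)}(-1)^{|V(G)\setminus S|}\big(\prod_{v\in V(G)\setminus S}w_1(v)\big)\mu_w(G[S],x)$ with $G[S]$ the induced subgraph; $\mu_w$ and $\eta_{(w,w_1)}$ of the empty graph are $1$. The weighted adjacency matrix $B=[b_{uv}]$ is the $n\times n$ matrix with $b_{uv}=w(e_{uv})$ if $uv$ is an edge and $u<v$, $b_{uu}=w_1(u)$, $b_{uv}=\overline{w(e_{vu})}$ if $vu$ is an edge and $u>v$, and $b_{uv}=0$ otherwise (so $B$ is Hermitian); $\phi_{(w,w_1)}(G,x)=\det(xI-B)$. For a cycle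 $C=v_1v_2\cdots v_mv_1$ ($m\ge3$), $w_2(C)=b_{v_1v_2}b_{v_2v_3}\cdots b_{v_mv_1}+b_{v_1v_m}b_{v_mv_{m-1}}\cdots b_{v_2v_1}$ (a real number); for a disjoint union $C=C_1\cup\dots\cup C_k$ of cycles, $w_2(C)=\prod_j w_2(C_j)$. $\mathrm{comp}(C)$ is the number of connected components of $C$. *)

theory Defs
  imports "Jordan_Normal_Form.Char_Poly" "HOL-Computational_Algebra.Polynomial"
begin

(* A finite simple graph on vertex set {1..n}: symmetric, irreflexive edge relation E
   whose edges lie in {1..n}.  An edge uv is the 2-set {u,v}. *)
definition simple_graph :: "nat \<Rightarrow> (nat \<Rightarrow> nat \<Rightarrow> bool) \<Rightarrow> bool" where
  "simple_graph n E \<longleftrightarrow>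
     (\<forall>u v. E u v \<longrightarrow> u \<in> {1..n} \<and> v \<in> {1..n} \<and> u \<noteq> v \<and> E v u)"

definition wadj :: "(nat \<Rightarrow> nat \<Rightarrow> bool) \<Rightarrow> (nat set \<Rightarrow> complex) \<Rightarrow> (nat \<Rightarrow> real)
                     \<Rightarrow> nat \<Rightarrow> nat \<Rightarrow> complex" where
  "wadj E w w1 u v =
     (if u = v then complex_of_real (w1 u)
      else if E u v then (if u < v then w {u, v} else cnj (w {u, v}))
      else 0)"

(* The n x n matrix B; row/column index i (0-based) corresponds to vertex i+1. *)
definition wadj_mat :: "nat \<Rightarrow> (nat \<Rightarrow> nat \<Rightarrow> bool) \<Rightarrow> (nat set \<Rightarrow> complex) \<Rightarrow> (nat \<Rightarrow> real)
                         \<Rightarrow> complex mat" where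
  "wadj_mat n E w w1 = mat n n (\<lambda>(i, j). wadj E w w1 (i + 1) (j + 1))"

definition phi :: "nat \<Rightarrow> (nat \<Rightarrow> nat \<Rightarrow> bool) \<Rightarrow> (nat set \<Rightarrow> complex) \<Rightarrow> (nat \<Rightarrow> real)
                    \<Rightarrow> complex poly" where
  "phi n E w w1 = char_poly (wadj_mat n E w w1)"

definition matching :: "(nat \<Rightarrow> nat \<Rightarrow> bool) \<Rightarrow> nat set \<Rightarrow> nat set set \<Rightarrow> bool" where
  "matching E S M \<longleftrightarrow>
     (\<forall>e\<in>M. \<exists>u v. e = {u, v} \<and> u \<in> S \<and> v \<in> S \<and> E u v) \<and>
     (\<forall>e1\<in>M. \<forall>e2\<in>M. e1 \<noteq> e2 \<longrightarrow> e1 \<inter> e2 = {})"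

definition mu :: "(nat \<Rightarrow> nat \<Rightarrow> bool) \<Rightarrow> (nat set \<Rightarrow> complex) \<Rightarrow> nat set \<Rightarrow> real poly" where
  "mu E w S = (\<Sum>M\<in>{M. matching E S M}.
       monom ((-1) ^ card M * (\<Prod>e\<in>M. cmod (w e)) ^ 2) (card S - 2 * card M))"

definition eta :: "(nat \<Rightarrow> nat \<Rightarrow> bool) \<Rightarrow> (nat set \<Rightarrow> complex) \<Rightarrow> (nat \<Rightarrow> real)
                    \<Rightarrow> nat set \<Rightarrow> real poly" where
  "eta E w w1 T = (\<Sum>S\<in>Pow T.
       Polynomial.smult ((-1) ^ card (T - S) * (\<Prod>v\<in>T - S. w1 v)) (mu E w S))"

definition cycle_list :: "(nat \<Rightarrow> nat \<Rightarrow> bool) \<Rightarrow> nat list \<Rightarrow> bool" where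
  "cycle_list E vs \<longleftrightarrow> length vs \<ge> 3 \<and> distinct vs \<and>
     (\<forall>i < length vs. E (vs ! i) (vs ! ((i + 1) mod length vs)))"

definition cycle_edges :: "nat list \<Rightarrow> nat set set" where
  "cycle_edges vs = {{vs ! i, vs ! ((i + 1) mod length vs)} | i. i < length vs}"

definition is_cycle :: "(nat \<Rightarrow> nat \<Rightarrow> bool) \<Rightarrow> nat set set \<Rightarrow> bool" where
  "is_cycle E K \<longleftrightarrow> (\<exists>vs. cycle_list E vs \<and> K = cycle_edges vs)"

(* Gamma(c): nonempty subgraphs (given by their edge sets F, vertex set \<Union>F)
   that are disjoint unions of cycles *)
definition cycle_subgraphs :: "(nat \<Rightarrow> nat \<Rightarrow> bool) \<Rightarrow> nat set set set" where
  "cycle_subgraphs E = {F. \<exists>\<C>. finite \<C> \<and> \<C> \<noteq> {} \<and> (\<forall>K\<in>\<C>. is_cycle E K) \<and>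
       (\<forall>K1\<in>\<C>. \<forall>K2\<in>\<C>. K1 \<noteq> K2 \<longrightarrow> \<Union>K1 \<inter> \<Union>K2 = {}) \<and> F = \<Union>\<C>}"

definition components :: "nat set set \<Rightarrow> nat set set" where
  "components F = {{u. (\<lambda>a b. {a, b} \<in> F)\<^sup>*\<^sup>* v u} | v. v \<in> \<Union>F}"

definition comp :: "nat set set \<Rightarrow> nat" where
  "comp F = card (components F)"

definition w2_list :: "(nat \<Rightarrow> nat \<Rightarrow> complex) \<Rightarrow> nat list \<Rightarrow> complex" where
  "w2_list b vs =
     (\<Prod>i<length vs. b (vs ! i) (vs ! ((i + 1) mod length vs))) +
     (\<Prod>i<length vs. b (vs ! ((i + 1) mod length vs)) (vs ! i))"

(* w_2 of a cycle given by its edge set K (via any traversal of it) *)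
definition w2_cycle :: "(nat \<Rightarrow> nat \<Rightarrow> complex) \<Rightarrow> nat set set \<Rightarrow> complex" where
  "w2_cycle b K = w2_list b (SOME vs. length vs \<ge> 3 \<and> distinct vs \<and> cycle_edges vs = K)"

definition w2 :: "(nat \<Rightarrow> nat \<Rightarrow> bool) \<Rightarrow> (nat set \<Rightarrow> complex) \<Rightarrow> (nat \<Rightarrow> real)
                   \<Rightarrow> nat set set \<Rightarrow> complex" where
  "w2 E w w1 F = (\<Prod>X\<in>components F. w2_cycle (wadj E w w1) {e\<in>F. e \<subseteq> X})"

end

theory Submission
  imports Defs
begin

text \<open>Expand \<open>det (x I - B)\<close> along the row of a vertex \<open>v\<close> and follow the cycle of the
  permutation through \<open>v\<close>: either \<open>v\<close> is fixed (factor \<open>x - w1 v\<close>), or it lies on a transposition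
  with a neighbour \<open>u\<close> (factor \<open>-|w(vu)|\<^sup>2\<close>), or on a cycle of length at least \<open>3\<close>, which must be a
  cycle \<open>C\<close> of \<open>G\<close>; its two orientations together contribute \<open>-w2(C)\<close>. Deleting \<open>v\<close> from the matchings
  defining \<open>\<eta>\<close> gives the first two terms of the same recurrence for \<open>\<eta>\<close>, so the right-hand side of
  the theorem, taken over the families of disjoint cycles inside a vertex set \<open>W\<close>, satisfies the
  whole recurrence, and induction on \<open>|W|\<close> identifies it with the determinant. Since \<open>B\<close> is
  Hermitian, \<open>w2(C) = 2 Re (\<Prod>b)\<close> is real.\<close>

definition det_on :: "(nat \<Rightarrow> nat \<Rightarrow> 'a::comm_ring_1) \<Rightarrow> nat set \<Rightarrow> 'a" where
  "det_on a W = (\<Sum>p\<in>{p. p permutes W}. of_int (sign p) * (\<Prod>i\<in>W. a i (p i)))"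

definition row_subst :: "(nat \<Rightarrow> nat \<Rightarrow> 'a) \<Rightarrow> nat \<Rightarrow> nat \<Rightarrow> nat \<Rightarrow> nat \<Rightarrow> 'a" where
  "row_subst a v p = (\<lambda>i j. if i = v then a p j else a i j)"

lemma det_on_cong:
  assumes "\<And>i j. i \<in> W \<Longrightarrow> j \<in> W \<Longrightarrow> a i j = b i j"
  shows "det_on a W = det_on b W"
  unfolding det_on_def
proof (rule sum.cong[OF refl])
  fix p assume "p \<in> {p. p permutes W}"
  then have "\<And>i. i \<in> W \<Longrightarrow> p i \<in> W" by (simp add: permutes_in_image)
  then show "of_int (sign p) * (\<Prod>i\<in>W. a i (p i)) = of_int (sign p) * (\<Prod>i\<in>W. b i (p i))"
    using assms by (auto intro!: prod.cong)
qed

lemma det_on_empty [simp]: "det_on a {} = 1"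
  unfolding det_on_def by (simp add: permutes_empty)

lemma sum_permutes_fixing:
  assumes "finite W" "v \<in> W"
  shows "(\<Sum>p\<in>{p. p permutes W \<and> p v = v}. of_int (sign p) * (\<Prod>i\<in>W. a i (p i)))
       = a v v * det_on a (W - {v})"
proof -
  have perms: "{p. p permutes W \<and> p v = v} = {p. p permutes (W - {v})}"
  proof (intro equalityI subsetI)
    fix p assume "p \<in> {p. p permutes W \<and> p v = v}"
    then show "p \<in> {p. p permutes (W - {v})}" using permutes_superset[of p W "W - {v}"] by auto
  next
    fix p assume "p \<in> {p. p permutes (W - {v})}"
    then show "p \<in> {p. p permutes W \<and> p v = v}"
      by (auto intro: permutes_subset simp: permutes_not_in)
  qed
  show ?thesis unfolding perms det_on_def sum_distrib_left
  proof (rule sum.cong[OF refl])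
    fix p assume "p \<in> {p. p permutes W - {v}}"
    then have "p v = v" by (simp add: permutes_not_in)
    then show "of_int (sign p) * (\<Prod>i\<in>W. a i (p i))
             = a v v * (of_int (sign p) * (\<Prod>i\<in>W - {v}. a i (p i)))"
      using assms by (simp add: prod.remove mult_ac)
  qed
qed

text \<open>Composing with the transposition of \<open>v\<close> and \<open>u\<close> turns the permutations of \<open>W\<close>
  sending \<open>v\<close> to \<open>u\<close> into the permutations of \<open>W - {u}\<close>, and the entry of row \<open>u\<close> that was
  used is then read off row \<open>v\<close>.\<close>

lemma sign_prod_comp_transpose:
  assumes fin: "finite W" and vW: "v \<in> W" and u: "u \<in> W - {v}" and q: "q permutes W - {u}"
  shows "of_int (sign (q \<circ> transpose v u)) * (\<Prod>i\<in>W. a i ((q \<circ> transpose v u) i))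
       = - (a v u * (of_int (sign q) * (\<Prod>i\<in>W - {u}. row_subst a v u i (q i))))"
proof -
  let ?t = "transpose v u"
  have "permutation q" using q fin by (meson finite_Diff permutes_imp_permutation)
  then have "sign (q \<circ> ?t) = sign q * sign ?t"
    by (rule sign_compose) (simp add: permutation_swap_id)
  then have sign: "sign (q \<circ> ?t) = - sign q" using u by (simp add: sign_swap_id)
  have qu: "q u = u" using q by (simp add: permutes_not_in)
  have "(\<Prod>i\<in>W. a i ((q \<circ> ?t) i))
      = a v ((q \<circ> ?t) v) * (a u ((q \<circ> ?t) u) * (\<Prod>i\<in>W - {v} - {u}. a i ((q \<circ> ?t) i)))"
    using fin vW u by (simp add: prod.remove)
  also have "(\<Prod>i\<in>W - {v} - {u}. a i ((q \<circ> ?t) i)) = (\<Prod>i\<in>W - {u} - {v}. row_subst a v u i (q i))"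
    by (rule prod.cong) (auto simp: row_subst_def transpose_apply_other)
  finally have lhs: "(\<Prod>i\<in>W. a i ((q \<circ> ?t) i))
      = a v ((q \<circ> ?t) v) * (a u ((q \<circ> ?t) u) * (\<Prod>i\<in>W - {u} - {v}. row_subst a v u i (q i)))" .
  have rhs: "(\<Prod>i\<in>W - {u}. row_subst a v u i (q i))
      = row_subst a v u v (q v) * (\<Prod>i\<in>W - {u} - {v}. row_subst a v u i (q i))"
    using fin u vW by (intro prod.remove) auto
  show ?thesis using qu u lhs rhs by (simp add: sign row_subst_def mult_ac)
qed

lemma sum_permutes_sending:
  assumes fin: "finite W" and vW: "v \<in> W" and u: "u \<in> W - {v}"
  shows "(\<Sum>p\<in>{p. p permutes W \<and> p v = u}. of_int (sign p) * (\<Prod>i\<in>W. a i (p i)))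
       = - (a v u * det_on (row_subst a v u) (W - {u}))"
proof -
  let ?f = "\<lambda>p. of_int (sign p) * (\<Prod>i\<in>W. a i (p i))"
  let ?t = "transpose v u"
  have tt: "\<And>q. q \<circ> ?t \<circ> ?t = q" by (simp add: comp_assoc)
  have t: "?t permutes W" using u vW by (intro permutes_swap_id) auto
  have "(\<Sum>p\<in>{p. p permutes W \<and> p v = u}. ?f p) = (\<Sum>q\<in>{q. q permutes (W - {u})}. ?f (q \<circ> ?t))"
  proof (rule sum.reindex_bij_witness[where i = "\<lambda>p. p \<circ> ?t" and j = "\<lambda>q. q \<circ> ?t"])
    fix q assume "q \<in> {q. q permutes (W - {u})}"
    then have q: "q permutes W - {u}" by simp
    have "q permutes W" using q by (rule permutes_subset) auto
    then have "q \<circ> ?t permutes W" using t by (rule permutes_compose[rotated])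
    moreover have "(q \<circ> ?t) v = u" using q by (simp add: permutes_not_in)
    ultimately show "q \<circ> ?t \<in> {p. p permutes W \<and> p v = u}" by simp
  next
    fix p assume "p \<in> {p. p permutes W \<and> p v = u}"
    then have p: "p permutes W" "p v = u" by auto
    then have "p \<circ> ?t permutes W" using t by (intro permutes_compose)
    then have "p \<circ> ?t permutes W - {u}"
      using permutes_superset[of "p \<circ> ?t" W "W - {u}"] p by auto
    then show "p \<circ> ?t \<in> {q. q permutes (W - {u})}" by simp
  qed (simp_all only: tt)
  also have "\<dots> = - (a v u * det_on (row_subst a v u) (W - {u}))"
    unfolding det_on_def sum_distrib_left sum_negf[symmetric]
    using sign_prod_comp_transpose[OF fin vW u] by (intro sum.cong) auto
  finally show ?thesis .
qed

lemma det_on_expand_row: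
  assumes fin: "finite W" and vW: "v \<in> W"
  shows "det_on a W = a v v * det_on a (W - {v})
           - (\<Sum>u\<in>W - {v}. a v u * det_on (row_subst a v u) (W - {u}))"
proof -
  let ?f = "\<lambda>p. of_int (sign p) * (\<Prod>i\<in>W. a i (p i))"
  have "det_on a W = (\<Sum>u\<in>W. \<Sum>p\<in>{p. p permutes W \<and> p v = u}. ?f p)"
    unfolding det_on_def
    by (rule sum.group[symmetric, OF finite_permutations[OF fin] fin, simplified])
       (auto simp: permutes_in_image vW)
  also have "\<dots> = (\<Sum>p\<in>{p. p permutes W \<and> p v = v}. ?f p) +
      (\<Sum>u\<in>W - {v}. \<Sum>p\<in>{p. p permutes W \<and> p v = u}. ?f p)"
    using fin vW by (simp add: sum.remove)
  finally show ?thesis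
    using fin vW by (simp add: sum_permutes_fixing sum_permutes_sending sum_negf)
qed

definition distinct_lists :: "'a set \<Rightarrow> 'a list set" where
  "distinct_lists S = {L. distinct L \<and> set L \<subseteq> S}"

lemma finite_distinct_lists:
  assumes "finite S"
  shows "finite (distinct_lists S)"
proof (rule finite_subset[OF _ finite_lists_length_le[OF assms, of "card S"]])
  show "distinct_lists S \<subseteq> {xs. set xs \<subseteq> S \<and> length xs \<le> card S}"
    using assms by (auto simp: distinct_lists_def simp flip: distinct_card intro: card_mono)
qed

lemma sum_distinct_lists_rec:
  assumes "finite S"
  shows "(\<Sum>L\<in>distinct_lists S. g L) = g [] + (\<Sum>u\<in>S. \<Sum>L\<in>distinct_lists (S - {u}). g (u # L))"
proof -
  have lists: "distinct_lists S = insert [] (\<Union>u\<in>S. (Cons u) ` distinct_lists (S - {u}))"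
  proof (intro equalityI subsetI)
    fix L assume "L \<in> distinct_lists S"
    then show "L \<in> insert [] (\<Union>u\<in>S. (Cons u) ` distinct_lists (S - {u}))"
      by (cases L) (auto simp: distinct_lists_def)
  qed (auto simp: distinct_lists_def)
  have "(\<Sum>L\<in>distinct_lists S. g L) = g [] + (\<Sum>L\<in>(\<Union>u\<in>S. (Cons u) ` distinct_lists (S - {u})). g L)"
    unfolding lists using assms by (subst sum.insert) (auto intro!: finite_distinct_lists)
  also have "\<dots> = g [] + (\<Sum>u\<in>S. \<Sum>L\<in>(Cons u) ` distinct_lists (S - {u}). g L)"
    using assms by (subst sum.UNION_disjoint) (auto intro!: finite_distinct_lists)
  finally show ?thesis by (simp add: sum.reindex)
qed

definition path_prod :: "(nat \<Rightarrow> nat \<Rightarrow> 'a::comm_ring_1) \<Rightarrow> nat \<Rightarrow> nat list \<Rightarrow> nat \<Rightarrow> 'a" where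
  "path_prod a p L v = prod_list (map (\<lambda>(x, y). a x y) (zip (p # L) (L @ [v])))"

lemma path_prod_Nil [simp]: "path_prod a p [] v = a p v"
  by (simp add: path_prod_def)

lemma path_prod_Cons [simp]: "path_prod a p (u # L) v = a p u * path_prod a u L v"
  by (simp add: path_prod_def)

lemma det_on_row_subst_expansion:
  assumes "finite W" "v \<in> W"
  shows "det_on (row_subst a v p) W
       = (\<Sum>L\<in>distinct_lists (W - {v}). (-1) ^ length L * path_prod a p L v * det_on a (W - {v} - set L))"
  using assms
proof (induction "card W" arbitrary: W p rule: less_induct)
  case less
  note fW = less.prems(1) and vW = less.prems(2)
  let ?S = "W - {v}"
  let ?rhs = "\<lambda>p S. \<Sum>L\<in>distinct_lists S. (-1) ^ length L * path_prod a p L v * det_on a (S - set L)"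
  have step: "row_subst a v p v u * det_on (row_subst (row_subst a v p) v u) (W - {u}) = a p u * ?rhs u (?S - {u})"
    if u: "u \<in> ?S" for u
  proof -
    have "card (W - {u}) < card W" using u fW by (meson card_Diff1_less DiffD1)
    moreover have "finite (W - {u})" "v \<in> W - {u}" using fW vW u by auto
    ultimately have "det_on (row_subst a v u) (W - {u}) = ?rhs u (W - {u} - {v})"
      by (rule less.hyps)
    moreover have "row_subst (row_subst a v p) v u = row_subst a v u"
      using u by (auto simp: row_subst_def fun_eq_iff)
    moreover have "W - {u} - {v} = ?S - {u}" by auto
    ultimately show ?thesis by (simp add: row_subst_def)
  qed
  have "det_on (row_subst a v p) ?S = det_on a ?S"
    by (rule det_on_cong) (auto simp: row_subst_def)
  then have "det_on (row_subst a v p) W = a p v * det_on a ?S - (\<Sum>u\<in>?S. a p u * ?rhs u (?S - {u}))"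
    using det_on_expand_row[OF fW vW, of "row_subst a v p"] step by (simp add: row_subst_def)
  also have "\<dots> = ?rhs p ?S"
  proof -
    have "\<And>u L. ?S - set (u # L) = ?S - {u} - set L" by auto
    then show ?thesis using fW
      by (subst sum_distinct_lists_rec) (simp_all add: sum_distrib_left sum_negf mult_ac)
  qed
  finally show ?case .
qed

text \<open>Expanding along row \<open>v\<close> repeatedly, every term of the determinant splits into the cycle of
  the permutation through \<open>v\<close> (the list \<open>v # L\<close>) and a permutation of the remaining indices.\<close>

corollary det_on_cycle_expansion:
  assumes "finite W" "v \<in> W"
  shows "det_on a W
       = (\<Sum>L\<in>distinct_lists (W - {v}). (-1) ^ length L * path_prod a v L v * det_on a (W - {v} - set L))"
proof -
  have "row_subst a v v = a" by (auto simp: row_subst_def fun_eq_iff)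
  then show ?thesis using det_on_row_subst_expansion[OF assms, of a v] by simp
qed

text \<open>Rows of \<open>wadj_mat\<close> are indexed from \<open>0\<close>, vertices from \<open>1\<close>: conjugating by \<open>Suc\<close>
  moves permutations of \<open>{0..<n}\<close> to permutations of \<open>{1..n}\<close> preserving their sign.\<close>

definition shift_perm :: "(nat \<Rightarrow> nat) \<Rightarrow> nat \<Rightarrow> nat" where
  "shift_perm p = (\<lambda>k. if k = 0 then 0 else Suc (p (k - 1)))"

lemma shift_perm_id: "shift_perm id = id"
  by (auto simp: shift_perm_def fun_eq_iff)

lemma shift_perm_transpose_comp:
  "shift_perm (transpose a b \<circ> p) = transpose (Suc a) (Suc b) \<circ> shift_perm p"
  by (auto simp: shift_perm_def fun_eq_iff transpose_def)

lemma swapidseq_shift_perm: "swapidseq n p \<Longrightarrow> swapidseq n (shift_perm p)"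
proof (induction n p rule: swapidseq.induct)
  case id
  then show ?case using shift_perm_id swapidseq.id by metis
next
  case (comp_Suc n p a b)
  then show ?case unfolding shift_perm_transpose_comp by (intro swapidseq.comp_Suc) auto
qed

lemma sign_shift_perm:
  assumes "permutation p"
  shows "sign (shift_perm p) = sign p"
proof -
  obtain m where m: "swapidseq m p" using assms unfolding permutation_def by auto
  have "evenperm p = even m" by (rule evenperm_unique[OF m refl])
  moreover have "evenperm (shift_perm p) = even m"
    by (rule evenperm_unique[OF swapidseq_shift_perm[OF m] refl])
  ultimately show ?thesis by (simp add: sign_def)
qed

lemma image_Suc_atLeast0LessThan: "Suc ` {0..<n} = {1..n}"
  by (simp add: atLeastLessThanSuc_atLeastAtMost[symmetric] image_Suc_atLeastLessThan)

lemma bij_betw_Suc_atLeast0LessThan: "bij_betw Suc {0..<n} {1..n}"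
  unfolding image_Suc_atLeast0LessThan[symmetric] by (simp add: bij_betw_def)

lemma bij_betw_pred_atLeastAtMost: "bij_betw (\<lambda>k. k - 1) {1..n} {0..<n::nat}"
  by (rule bij_betw_byWitness[where f' = Suc]) auto

lemma shift_perm_permutes:
  assumes "p permutes {0..<n}"
  shows "shift_perm p permutes {1..n}"
proof -
  have "bij_betw (Suc \<circ> p \<circ> (\<lambda>k. k - 1)) {1..n} {1..n}"
  proof -
    have "bij_betw p {0..<n} {0..<n}" using assms by (rule permutes_imp_bij)
    then show ?thesis
      using bij_betw_trans[OF bij_betw_trans[OF bij_betw_pred_atLeastAtMost] bij_betw_Suc_atLeast0LessThan]
      by (simp only: comp_assoc)
  qed
  then have "bij_betw (shift_perm p) {1..n} {1..n}"
    by (rule bij_betw_cong[THEN iffD1, rotated]) (auto simp: shift_perm_def)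
  moreover have "{x. shift_perm p x \<noteq> x} \<subseteq> {1..n}"
  proof
    fix x assume x: "x \<in> {x. shift_perm p x \<noteq> x}"
    then have "x \<noteq> 0" by (auto simp: shift_perm_def split: if_splits)
    moreover have "x \<le> n"
    proof (rule ccontr)
      assume "\<not> x \<le> n"
      then have "p (x - 1) = x - 1" using assms by (intro permutes_not_in) auto
      then show False using x \<open>x \<noteq> 0\<close> by (simp add: shift_perm_def)
    qed
    ultimately show "x \<in> {1..n}" by auto
  qed
  ultimately show ?thesis by (simp add: permutes_altdef)
qed

lemma unshift_perm_permutes:
  assumes "q permutes {1..n}"
  shows "(\<lambda>k. q (Suc k) - 1) permutes {0..<n}"
proof -
  have "bij_betw ((\<lambda>k. k - 1) \<circ> q \<circ> Suc) {0..<n} {0..<n}"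
  proof -
    have "bij_betw q {1..n} {1..n}" using assms by (rule permutes_imp_bij)
    then show ?thesis
      using bij_betw_trans[OF bij_betw_trans[OF bij_betw_Suc_atLeast0LessThan] bij_betw_pred_atLeastAtMost]
      by (simp only: comp_assoc)
  qed
  moreover have "{x. q (Suc x) - 1 \<noteq> x} \<subseteq> {0..<n}"
  proof
    fix x assume x: "x \<in> {x. q (Suc x) - 1 \<noteq> x}"
    show "x \<in> {0..<n}"
    proof (rule ccontr)
      assume "x \<notin> {0..<n}"
      then have "q (Suc x) = Suc x" using assms by (intro permutes_not_in) auto
      then show False using x by simp
    qed
  qed
  ultimately show ?thesis by (simp add: permutes_altdef o_def)
qed

lemma det_on_shift:
  "(\<Sum>p\<in>{p. p permutes {0..<n}}. of_int (sign p) * (\<Prod>i = 0..<n. a (Suc i) (Suc (p i))))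
     = det_on a {1..n}"
  unfolding det_on_def
proof (rule sum.reindex_bij_witness[where j = shift_perm and i = "\<lambda>q k. q (Suc k) - 1"])
  fix p assume "p \<in> {p. p permutes {0..<n}}"
  then have p: "p permutes {0..<n}" by simp
  show "(\<lambda>k. shift_perm p (Suc k) - 1) = p" by (simp add: shift_perm_def)
  show "shift_perm p \<in> {p. p permutes {1..n}}" using shift_perm_permutes[OF p] by simp
  have "sign (shift_perm p) = sign p"
    using p by (intro sign_shift_perm permutes_imp_permutation) auto
  moreover have "(\<Prod>i\<in>{1..n}. a i (shift_perm p i)) = (\<Prod>i = 0..<n. a (Suc i) (Suc (p i)))"
    unfolding image_Suc_atLeast0LessThan[symmetric] by (subst prod.reindex) (auto simp: shift_perm_def)
  ultimately show "of_int (sign (shift_perm p)) * (\<Prod>i\<in>{1..n}. a i (shift_perm p i)) =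
     of_int (sign p) * (\<Prod>i = 0..<n. a (Suc i) (Suc (p i)))" by simp
next
  fix q assume "q \<in> {p. p permutes {1..n}}"
  then have q: "q permutes {1..n}" by simp
  show "(\<lambda>k. q (Suc k) - 1) \<in> {p. p permutes {0..<n}}" using unshift_perm_permutes[OF q] by simp
  have q0: "q 0 = 0" using q by (intro permutes_not_in) auto
  then have "\<And>k. k \<noteq> 0 \<Longrightarrow> q k \<noteq> 0" using permutes_inj[OF q] by (metis injD)
  then show "shift_perm (\<lambda>k. q (Suc k) - 1) = q"
    using q0 by (auto simp: shift_perm_def fun_eq_iff gr0_conv_Suc)
qed

definition char_entry :: "(nat \<Rightarrow> nat \<Rightarrow> 'a::comm_ring_1) \<Rightarrow> nat \<Rightarrow> nat \<Rightarrow> 'a poly" where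
  "char_entry b u v = (if u = v then [:- b u u, 1:] else [:- b u v:])"

lemma phi_eq_det_on: "phi n E w w1 = det_on (char_entry (wadj E w w1)) {1..n}"
proof -
  let ?C = "char_poly_matrix (wadj_mat n E w w1)"
  have dim: "dim_row ?C = n" "dim_col ?C = n"
    by (auto simp: char_poly_matrix_def wadj_mat_def)
  have entry: "?C $$ (i, j) = char_entry (wadj E w w1) (Suc i) (Suc j)" if "i < n" "j < n" for i j
    using that by (auto simp: char_poly_matrix_def wadj_mat_def char_entry_def wadj_def)
  have "phi n E w w1 = (\<Sum>p\<in>{p. p permutes {0..<n}}. of_int (sign p) * (\<Prod>i = 0..<n. ?C $$ (i, p i)))"
    unfolding phi_def char_poly_def det_def dim by simp
  also have "\<dots> = (\<Sum>p\<in>{p. p permutes {0..<n}}.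
      of_int (sign p) * (\<Prod>i = 0..<n. char_entry (wadj E w w1) (Suc i) (Suc (p i))))"
    by (intro sum.cong prod.cong refl arg_cong2[where f = "(*)"])
       (auto simp: entry permutes_in_image)
  also have "\<dots> = det_on (char_entry (wadj E w w1)) {1..n}" by (rule det_on_shift)
  finally show ?thesis .
qed

text \<open>A list \<open>c\<close> of distinct vertices is read as the closed walk \<open>c ! 0, c ! 1, \<dots>, c ! 0\<close>.\<close>

definition cycle_arcs :: "nat list \<Rightarrow> (nat \<times> nat) set" where
  "cycle_arcs c = set (zip c (rotate1 c))"

definition cycle_prod :: "(nat \<Rightarrow> nat \<Rightarrow> 'c::comm_ring_1) \<Rightarrow> nat list \<Rightarrow> 'c" where
  "cycle_prod b c = prod_list (map (\<lambda>(x, y). b x y) (zip c (rotate1 c)))"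

lemma cycle_arcs_conv_nth: "cycle_arcs c = {(c ! i, c ! (Suc i mod length c)) | i. i < length c}"
  unfolding cycle_arcs_def set_zip by (auto simp: nth_rotate1)

lemma cycle_arcs_nthI: "i < length c \<Longrightarrow> (c ! i, c ! (Suc i mod length c)) \<in> cycle_arcs c"
  unfolding cycle_arcs_conv_nth by auto

lemma Suc_mod_eq_if: "i < m \<Longrightarrow> Suc i mod m = (if Suc i = m then 0 else Suc i)"
  by auto

lemma cycle_arcs_irrefl: assumes "distinct c" "2 \<le> length c" "(x, y) \<in> cycle_arcs c" shows "x \<noteq> y"
proof -
  obtain i where i: "i < length c" "x = c ! i" "y = c ! (Suc i mod length c)"
    using assms unfolding cycle_arcs_conv_nth by auto
  have "Suc i mod length c < length c" "Suc i mod length c \<noteq> i"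
    using i assms(2) by (auto simp: Suc_mod_eq_if)
  then show ?thesis using i assms(1) by (simp add: nth_eq_iff_index_eq)
qed

lemma card_cycle_arcs: "distinct c \<Longrightarrow> card (cycle_arcs c) = length c"
  unfolding cycle_arcs_def by (simp add: distinct_card distinct_zipI1)

lemma cycle_arcs_functional: "distinct c \<Longrightarrow> (x, y) \<in> cycle_arcs c \<Longrightarrow> (x, y') \<in> cycle_arcs c \<Longrightarrow> y = y'"
  unfolding cycle_arcs_conv_nth by (auto simp: nth_eq_iff_index_eq)

lemma cycle_arcs_injective: assumes "distinct c" "(x, y) \<in> cycle_arcs c" "(x', y) \<in> cycle_arcs c" shows "x = x'"
proof -
  obtain i where i: "i < length c" "x = c ! i" "y = c ! (Suc i mod length c)"
    using assms unfolding cycle_arcs_conv_nth by auto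
  obtain j where j: "j < length c" "x' = c ! j" "y = c ! (Suc j mod length c)"
    using assms unfolding cycle_arcs_conv_nth by auto
  have "Suc i mod length c < length c" "Suc j mod length c < length c"
    using i j by (auto simp: Suc_mod_eq_if)
  then have "Suc i mod length c = Suc j mod length c"
    using i j assms(1) by (simp add: nth_eq_iff_index_eq)
  then have "i = j" using i j by (auto simp: Suc_mod_eq_if split: if_splits)
  then show ?thesis using i j by simp
qed

lemma finite_cycle_arcs[simp]: "finite (cycle_arcs c)" unfolding cycle_arcs_def by simp

lemma cycle_edges_conv_arcs: "cycle_edges c = (\<lambda>(x, y). {x, y}) ` cycle_arcs c"
  unfolding cycle_edges_def cycle_arcs_conv_nth by auto

lemma cycle_list_conv_arcs: "cycle_list E c \<longleftrightarrow> 3 \<le> length c \<and> distinct c \<and> (\<forall>(x, y)\<in>cycle_arcs c. E x y)"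
  unfolding cycle_list_def cycle_arcs_conv_nth by auto

lemma cycle_prod_conv_arcs: "distinct c \<Longrightarrow> cycle_prod b c = (\<Prod>(x, y)\<in>cycle_arcs c. b x y)"
  unfolding cycle_prod_def cycle_arcs_def by (simp add: prod.distinct_set_conv_list distinct_zipI1)

lemma w2_list_conv_cycle_prod: "w2_list b c = cycle_prod b c + cycle_prod (\<lambda>x y. b y x) c"
proof -
  have "\<And>b. (\<Prod>i<length c. b (c ! i) (c ! ((i + 1) mod length c))) = cycle_prod b c"
    unfolding cycle_prod_def prod.list_conv_set_nth
    by (auto intro!: prod.cong simp: atLeast0LessThan nth_rotate1)
  from this[of b] this[of "\<lambda>x y. b y x"] show ?thesis unfolding w2_list_def by simp
qed

lemma Union_cycle_edges: assumes "c \<noteq> []" shows "\<Union> (cycle_edges c) = set c"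
proof
  have bnd: "\<And>i. i < length c \<Longrightarrow> Suc i mod length c < length c" using assms by simp
  show "\<Union> (cycle_edges c) \<subseteq> set c" unfolding cycle_edges_def using bnd by (auto intro!: nth_mem)
  show "set c \<subseteq> \<Union> (cycle_edges c)"
  proof
    fix x assume "x \<in> set c"
    then obtain i where i: "i < length c" "x = c ! i" by (auto simp: in_set_conv_nth)
    then have "{c ! i, c ! (Suc i mod length c)} \<in> cycle_edges c" unfolding cycle_edges_def by auto
    then show "x \<in> \<Union> (cycle_edges c)" using i by blast
  qed
qed

lemma cycle_edge_arc: "{x, y} \<in> cycle_edges c \<Longrightarrow> (x, y) \<in> cycle_arcs c \<or> (y, x) \<in> cycle_arcs c"
  unfolding cycle_edges_conv_arcs by (auto simp: doubleton_eq_iff)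

lemma cycle_arc_edge: "(x, y) \<in> cycle_arcs c \<Longrightarrow> {x, y} \<in> cycle_edges c"
  unfolding cycle_edges_conv_arcs by force

lemma cycle_arcs_rev: "cycle_arcs (v # rev L) = converse (cycle_arcs (v # L))"
proof -
  have "cycle_arcs (v # rev L) = set (zip (rev (L @ [v])) (rev (v # L)))"
    by (simp add: cycle_arcs_def)
  also have "\<dots> = set (zip (L @ [v]) (v # L))" by (subst zip_rev) auto
  also have "\<dots> = converse (cycle_arcs (v # L))"
    unfolding cycle_arcs_def by (subst zip_commute) auto
  finally show ?thesis .
qed

lemma cycle_edges_rev: "cycle_edges (v # rev L) = cycle_edges (v # L)"
  unfolding cycle_edges_conv_arcs cycle_arcs_rev by (auto simp: insert_commute image_iff)

lemma cycle_arcs_rotate: assumes "distinct c" shows "cycle_arcs (rotate k c) = cycle_arcs c"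
proof -
  have "cycle_arcs (rotate k c) \<subseteq> cycle_arcs c"
  proof
    fix p assume "p \<in> cycle_arcs (rotate k c)"
    then obtain i where i: "i < length c" and p: "p = (rotate k c ! i, rotate k c ! (Suc i mod length c))"
      unfolding cycle_arcs_conv_nth by auto
    have m: "length c > 0" using i by linarith
    have "rotate k c ! (Suc i mod length c) = c ! ((k + Suc i mod length c) mod length c)"
      using m by (simp add: nth_rotate)
    also have "(k + Suc i mod length c) mod length c = Suc ((k + i) mod length c) mod length c"
      by (simp add: mod_add_right_eq mod_Suc_eq)
    finally have "p = (c ! ((k + i) mod length c), c ! (Suc ((k + i) mod length c) mod length c))"
      using p i by (simp add: nth_rotate)
    moreover have "(k + i) mod length c < length c" using m by simp
    ultimately show "p \<in> cycle_arcs c" using cycle_arcs_nthI by metis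
  qed
  moreover have "card (cycle_arcs (rotate k c)) = card (cycle_arcs c)"
    using assms by (simp add: card_cycle_arcs)
  ultimately show ?thesis by (intro card_subset_eq) auto
qed

lemma cycle_edges_rotate: "distinct c \<Longrightarrow> cycle_edges (rotate k c) = cycle_edges c"
  unfolding cycle_edges_conv_arcs by (simp add: cycle_arcs_rotate)

text \<open>Two traversals of the same cycle that start with the same arc agree arc by arc: the
  reversed orientation of a later edge would give a vertex two predecessors.\<close>

lemma cycle_arcs_eq_if_first_arc:
  assumes dc: "distinct c" and dd: "distinct d" and l3: "3 \<le> length d" and ld: "length d = length c"
    and ce: "cycle_edges d = cycle_edges c" and st: "(d ! 0, d ! 1) \<in> cycle_arcs c"
  shows "cycle_arcs d = cycle_arcs c"
proof -
  let ?m = "length d"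
  have arc: "(d ! i, d ! (Suc i mod ?m)) \<in> cycle_arcs c" if "i < ?m" for i
    using that
  proof (induction i)
    case 0
    then show ?case using st l3 by simp
  next
    case (Suc i)
    let ?j = "Suc (Suc i) mod ?m"
    have prev: "(d ! i, d ! Suc i) \<in> cycle_arcs c" using Suc by simp
    have "{d ! Suc i, d ! ?j} \<in> cycle_edges c"
      using cycle_arc_edge[OF cycle_arcs_nthI[OF Suc.prems]] ce by simp
    then consider "(d ! Suc i, d ! ?j) \<in> cycle_arcs c" | "(d ! ?j, d ! Suc i) \<in> cycle_arcs c"
      using cycle_edge_arc by blast
    then show ?case
    proof cases
      case 2
      then have "d ! ?j = d ! i" using cycle_arcs_injective[OF dc _ prev] by blast
      moreover have "?j \<noteq> i" "?j < ?m" "i < ?m" using Suc.prems l3 by (auto simp: Suc_mod_eq_if)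
      ultimately show ?thesis using dd by (simp add: nth_eq_iff_index_eq)
    qed simp
  qed
  have "cycle_arcs d \<subseteq> cycle_arcs c" using arc by (auto simp: cycle_arcs_conv_nth)
  moreover have "card (cycle_arcs d) = card (cycle_arcs c)" using dc dd ld by (simp add: card_cycle_arcs)
  ultimately show ?thesis by (intro card_subset_eq) auto
qed

lemma cycle_edges_nonempty: "c \<noteq> [] \<Longrightarrow> cycle_edges c \<noteq> {}"
  unfolding cycle_edges_def by auto

lemma length_eq_if_cycle_edges_eq:
  assumes "distinct c" "distinct d" "c \<noteq> []" "cycle_edges d = cycle_edges c"
  shows "length d = length c"
proof -
  have "d \<noteq> []" using assms cycle_edges_nonempty[of c] by (auto simp: cycle_edges_def)
  then have "set d = set c" using assms Union_cycle_edges by metis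
  then show ?thesis using assms by (metis distinct_card)
qed

lemma cycle_arcs_eq_or_converse:
  assumes dc: "distinct (v # L)" and l2: "2 \<le> length L" and dd: "distinct d"
    and ce: "cycle_edges d = cycle_edges (v # L)"
  shows "cycle_arcs d = cycle_arcs (v # L) \<or> cycle_arcs d = converse (cycle_arcs (v # L))"
proof -
  have ld: "length d = length (v # L)" using length_eq_if_cycle_edges_eq[OF dc dd _ ce] by simp
  have l3: "3 \<le> length (v # L)" using l2 by simp
  have "(d ! 0, d ! (Suc 0 mod length d)) \<in> cycle_arcs d" using ld by (intro cycle_arcs_nthI) simp
  moreover have "Suc 0 mod length d = 1" using ld l2 by (cases L) auto
  ultimately have "(d ! 0, d ! 1) \<in> cycle_arcs d" by simp
  then have "{d ! 0, d ! 1} \<in> cycle_edges (v # L)" using ce by (auto dest: cycle_arc_edge)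
  then have "(d ! 0, d ! 1) \<in> cycle_arcs (v # L) \<or> (d ! 1, d ! 0) \<in> cycle_arcs (v # L)"
    by (rule cycle_edge_arc)
  then show ?thesis
  proof
    assume "(d ! 0, d ! 1) \<in> cycle_arcs (v # L)"
    then show ?thesis using cycle_arcs_eq_if_first_arc[OF dc dd _ ld ce] l3 ld by simp
  next
    assume "(d ! 1, d ! 0) \<in> cycle_arcs (v # L)"
    then have st: "(d ! 0, d ! 1) \<in> cycle_arcs (v # rev L)" by (simp add: cycle_arcs_rev)
    have dc': "distinct (v # rev L)" using dc by simp
    have "cycle_arcs d = cycle_arcs (v # rev L)"
      using cycle_arcs_eq_if_first_arc[OF dc' dd _ _ _ st] l3 ld ce cycle_edges_rev[of v L] by simp
    then show ?thesis by (simp add: cycle_arcs_rev)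
  qed
qed

lemma cycle_arcs_inj_Cons:
  assumes dL: "distinct (v # L)" and dL': "distinct (v # L')"
    and arcs: "cycle_arcs (v # L') = cycle_arcs (v # L)"
  shows "L' = L"
proof -
  have len: "length (v # L') = length (v # L)"
    using card_cycle_arcs[OF dL] card_cycle_arcs[OF dL'] arcs by simp
  have "(v # L') ! i = (v # L) ! i" if "i < length (v # L)" for i
    using that
  proof (induction i)
    case (Suc i)
    have a: "((v # L) ! i, (v # L) ! Suc i) \<in> cycle_arcs (v # L)"
      using cycle_arcs_nthI[of i "v # L"] Suc.prems by simp
    have "((v # L') ! i, (v # L') ! Suc i) \<in> cycle_arcs (v # L')"
      using cycle_arcs_nthI[of i "v # L'"] Suc.prems len by (simp del: length_Cons)
    then have "((v # L) ! i, (v # L') ! Suc i) \<in> cycle_arcs (v # L)"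
      using Suc arcs by simp
    then show ?case using cycle_arcs_functional[OF dL _ a] by blast
  qed simp
  then have "v # L' = v # L" using len by (intro nth_equalityI) auto
  then show ?thesis by simp
qed

lemma prod_list_char_entry_offdiag:
  assumes "\<forall>(x, y)\<in>set zs. x \<noteq> y"
  shows "prod_list (map (\<lambda>(x, y). char_entry b x y) zs) = (-1) ^ length zs * [:prod_list (map (\<lambda>(x, y). b x y) zs):]"
  using assms
proof (induction zs)
  case Nil then show ?case by simp
next
  case (Cons z zs)
  obtain x y where z: "z = (x, y)" by fastforce
  have xy: "x \<noteq> y" using Cons.prems z by auto
  have "prod_list (map (\<lambda>(x, y). char_entry b x y) (z # zs)) = [:- b x y:] * ((-1) ^ length zs * [:prod_list (map (\<lambda>(x, y). b x y) zs):])"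
    using Cons xy z by (simp add: char_entry_def)
  also have "\<dots> = (-1) ^ length (z # zs) * [:prod_list (map (\<lambda>(x, y). b x y) (z # zs)):]"
    using z by (simp add: algebra_simps)
  finally show ?case .
qed

lemma path_prod_char_entry_cycle:
  assumes "distinct (v # L)" "L \<noteq> []"
  shows "path_prod (char_entry b) v L v = (-1) ^ Suc (length L) * [:cycle_prod b (v # L):]"
proof -
  have r: "rotate1 (v # L) = L @ [v]" by simp
  have "\<forall>(x, y)\<in>set (zip (v # L) (rotate1 (v # L))). x \<noteq> y"
  proof
    fix p assume "p \<in> set (zip (v # L) (rotate1 (v # L)))"
    then have "p \<in> cycle_arcs (v # L)" by (simp add: cycle_arcs_def)
    moreover have "2 \<le> length (v # L)" using assms(2) by (cases L) auto
    ultimately show "case p of (x, y) \<Rightarrow> x \<noteq> y" using cycle_arcs_irrefl[OF assms(1)] by (cases p) auto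
  qed
  from prod_list_char_entry_offdiag[OF this, of b] show ?thesis
    unfolding path_prod_def cycle_prod_def r by simp
qed

lemma det_on_char_entry_expansion:
  assumes fW: "finite W" and vW: "v \<in> W"
  shows "det_on (char_entry b) W = [:- b v v, 1:] * det_on (char_entry b) (W - {v})
     - (\<Sum>u\<in>W - {v}. [:b v u * b u v:] * det_on (char_entry b) (W - {v} - {u}))
     - (\<Sum>L\<in>{L \<in> distinct_lists (W - {v}). 2 \<le> length L}. [:cycle_prod b (v # L):] * det_on (char_entry b) (W - {v} - set L))"
proof -
  let ?a = "char_entry b"
  let ?S = "W - {v}"
  let ?f = "\<lambda>L. (-1) ^ length L * path_prod ?a v L v * det_on ?a (?S - set L)"
  have fS: "finite ?S" using fW by simp
  have e2: "{L \<in> distinct_lists ?S. length L < 2} = insert [] ((\<lambda>u. [u]) ` ?S)"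
  proof (intro equalityI subsetI)
    fix x assume "x \<in> {L \<in> distinct_lists ?S. length L < 2}"
    then show "x \<in> insert [] ((\<lambda>u. [u]) ` ?S)"
      by (cases x) (auto simp: image_iff distinct_lists_def)
  next
    fix x assume "x \<in> insert [] ((\<lambda>u. [u]) ` ?S)"
    then show "x \<in> {L \<in> distinct_lists ?S. length L < 2}" by (auto simp: distinct_lists_def)
  qed
  have "det_on ?a W = (\<Sum>L\<in>distinct_lists ?S. ?f L)" by (rule det_on_cycle_expansion[OF fW vW])
  also have "distinct_lists ?S = {L \<in> distinct_lists ?S. length L < 2} \<union> {L \<in> distinct_lists ?S. 2 \<le> length L}" by auto
  also have "(\<Sum>L\<in>{L \<in> distinct_lists ?S. length L < 2} \<union> {L \<in> distinct_lists ?S. 2 \<le> length L}. ?f L) =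
     (\<Sum>L\<in>{L \<in> distinct_lists ?S. length L < 2}. ?f L) + (\<Sum>L\<in>{L \<in> distinct_lists ?S. 2 \<le> length L}. ?f L)"
    by (rule sum.union_disjoint) (auto intro: finite_subset[OF _ finite_distinct_lists[OF fS]])
  also note e2
  also have "(\<Sum>L\<in>insert [] ((\<lambda>u. [u]) ` ?S). ?f L) = ?f [] + (\<Sum>u\<in>?S. ?f [u])"
    using fS by (subst sum.insert) (auto simp: sum.reindex inj_on_def)
  also have "?f [] = [:- b v v, 1:] * det_on ?a ?S" by (simp add: char_entry_def)
  also have "(\<Sum>u\<in>?S. ?f [u]) = - (\<Sum>u\<in>W - {v}. [:b v u * b u v:] * det_on ?a (W - {v} - {u}))"
    unfolding sum_negf[symmetric]
    by (rule sum.cong[OF refl]) (auto simp: char_entry_def mult.commute)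
  also have "(\<Sum>L\<in>{L \<in> distinct_lists ?S. 2 \<le> length L}. ?f L) =
     - (\<Sum>L\<in>{L \<in> distinct_lists ?S. 2 \<le> length L}. [:cycle_prod b (v # L):] * det_on ?a (W - {v} - set L))"
    unfolding sum_negf[symmetric]
  proof (rule sum.cong[OF refl])
    fix L assume "L \<in> {L \<in> distinct_lists ?S. 2 \<le> length L}"
    then have L: "distinct (v # L)" "L \<noteq> []" by (auto simp: distinct_lists_def)
    show "?f L = - ([:cycle_prod b (v # L):] * det_on ?a (W - {v} - set L))"
      unfolding path_prod_char_entry_cycle[OF L] by (simp add: power_Suc)
  qed
  finally show ?thesis by (simp add: algebra_simps)
qed

text \<open>Matchings and the families in \<open>\<Gamma>(c)\<close> are both packings: finite families of pieces whose
  vertex sets \<open>V K\<close> are pairwise disjoint subsets of \<open>W\<close>. Both recurrences below come from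
  splitting off the piece that covers a fixed vertex \<open>v\<close>.\<close>

definition packings :: "('p \<Rightarrow> bool) \<Rightarrow> ('p \<Rightarrow> 'v set) \<Rightarrow> 'v set \<Rightarrow> 'p set set" where
  "packings P V W = {C. finite C \<and> (\<forall>K\<in>C. P K \<and> V K \<subseteq> W) \<and>
     (\<forall>K1\<in>C. \<forall>K2\<in>C. K1 \<noteq> K2 \<longrightarrow> V K1 \<inter> V K2 = {})}"

lemma packingsI:
  assumes "finite C" "\<And>K. K \<in> C \<Longrightarrow> P K" "\<And>K. K \<in> C \<Longrightarrow> V K \<subseteq> W"
    "\<And>K1 K2. K1 \<in> C \<Longrightarrow> K2 \<in> C \<Longrightarrow> K1 \<noteq> K2 \<Longrightarrow> V K1 \<inter> V K2 = {}"
  shows "C \<in> packings P V W"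
  using assms unfolding packings_def by blast

lemma packingsD:
  assumes "C \<in> packings P V W"
  shows "finite C" "\<And>K. K \<in> C \<Longrightarrow> P K" "\<And>K. K \<in> C \<Longrightarrow> V K \<subseteq> W"
    "\<And>K1 K2. K1 \<in> C \<Longrightarrow> K2 \<in> C \<Longrightarrow> K1 \<noteq> K2 \<Longrightarrow> V K1 \<inter> V K2 = {}"
  using assms unfolding packings_def by blast+

lemma finite_packings:
  assumes "finite {K. P K \<and> V K \<subseteq> W}"
  shows "finite (packings P V W)"
  by (rule finite_subset[OF _ finite_Pow_iff[THEN iffD2, OF assms]]) (auto dest: packingsD)

lemma packings_empty:
  assumes "\<And>K. P K \<Longrightarrow> V K \<noteq> {}"
  shows "packings P V {} = {{}}"
  using assms by (auto intro: packingsI dest: packingsD)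

lemma packings_avoiding:
  "{C \<in> packings P V W. v \<notin> \<Union>(V ` C)} = packings P V (W - {v})"
  by (auto simp: packings_def)

lemma packings_covering:
  "{C \<in> packings P V W. v \<in> \<Union>(V ` C)}
     = (\<lambda>(K, C). insert K C) ` (SIGMA K:{K. P K \<and> v \<in> V K \<and> V K \<subseteq> W}. packings P V (W - V K))"
proof (intro equalityI subsetI)
  fix C assume "C \<in> {C \<in> packings P V W. v \<in> \<Union>(V ` C)}"
  then have C: "C \<in> packings P V W" and "v \<in> \<Union>(V ` C)" by auto
  then obtain K where K: "K \<in> C" "v \<in> V K" by blast
  have "C - {K} \<in> packings P V (W - V K)"
    using packingsD[OF C] K by (intro packingsI) blast+
  moreover have "C = insert K (C - {K})" using K by auto
  ultimately show "C \<in> (\<lambda>(K, C). insert K C) ` (SIGMA K:{K. P K \<and> v \<in> V K \<and> V K \<subseteq> W}. packings P V (W - V K))"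
    using K packingsD[OF C] by blast
next
  fix C assume "C \<in> (\<lambda>(K, C). insert K C) ` (SIGMA K:{K. P K \<and> v \<in> V K \<and> V K \<subseteq> W}. packings P V (W - V K))"
  then obtain K C' where K: "P K" "v \<in> V K" "V K \<subseteq> W" and C': "C' \<in> packings P V (W - V K)"
    and C: "C = insert K C'" by auto
  have disj: "V K \<inter> V K2 = {}" "V K2 \<inter> V K = {}" if "K2 \<in> C'" for K2
    using packingsD(3)[OF C' that] by auto
  have "C \<in> packings P V W"
    unfolding C
  proof (rule packingsI)
    fix K1 K2 assume "K1 \<in> insert K C'" "K2 \<in> insert K C'" "K1 \<noteq> K2"
    then show "V K1 \<inter> V K2 = {}" using disj packingsD(4)[OF C'] by blast
  qed (use K packingsD[OF C'] in auto)
  then show "C \<in> {C \<in> packings P V W. v \<in> \<Union>(V ` C)}" using K C by blast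
qed

lemma inj_on_insert_packings:
  assumes "\<And>K. P K \<Longrightarrow> V K \<noteq> {}"
  shows "inj_on (\<lambda>(K, C). insert K C) (SIGMA K:{K. P K \<and> v \<in> V K \<and> V K \<subseteq> W}. packings P V (W - V K))"
proof (rule inj_onI, clarify)
  fix K C K' C'
  assume K: "P K" "v \<in> V K" and C: "C \<in> packings P V (W - V K)"
    and K': "P K'" "v \<in> V K'" and C': "C' \<in> packings P V (W - V K')"
    and eq: "insert K C = insert K' C'"
  have notin: "K \<notin> C" "K' \<notin> C'"
    using assms K K' packingsD(3)[OF C, of K] packingsD(3)[OF C', of K'] by blast+
  have "K = K'"
  proof (rule ccontr)
    assume "K \<noteq> K'"
    then have "K \<in> C'" using eq by blast
    then show False using packingsD(3)[OF C'] K K' by blast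
  qed
  moreover from this have "C = C'" using eq notin by (metis insert_ident)
  ultimately show "K = K' \<and> C = C'" ..
qed

lemma sum_packings_split:
  assumes fin: "finite {K. P K \<and> V K \<subseteq> W}" and ne: "\<And>K. P K \<Longrightarrow> V K \<noteq> {}"
  shows "(\<Sum>C\<in>packings P V W. g C) = (\<Sum>C\<in>packings P V (W - {v}). g C)
           + (\<Sum>K | P K \<and> v \<in> V K \<and> V K \<subseteq> W. \<Sum>C\<in>packings P V (W - V K). g (insert K C))"
proof -
  let ?Ks = "{K. P K \<and> v \<in> V K \<and> V K \<subseteq> W}"
  have fin_sub: "finite {K. P K \<and> V K \<subseteq> W'}" if "W' \<subseteq> W" for W'
    using that by (auto intro: finite_subset[OF _ fin])
  have "(\<Sum>C\<in>packings P V W. g C)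
      = (\<Sum>C\<in>{C \<in> packings P V W. v \<notin> \<Union>(V ` C)}. g C) + (\<Sum>C\<in>{C \<in> packings P V W. v \<in> \<Union>(V ` C)}. g C)"
    using finite_packings[OF fin] by (subst sum.union_disjoint[symmetric]) (auto intro: sum.cong)
  also have "(\<Sum>C\<in>{C \<in> packings P V W. v \<in> \<Union>(V ` C)}. g C)
      = (\<Sum>(K, C)\<in>(SIGMA K:?Ks. packings P V (W - V K)). g (insert K C))"
    using sum.reindex[OF inj_on_insert_packings[where v = v and W = W, OF ne], where g = g]
    unfolding packings_covering by (simp add: case_prod_beta o_def)
  also have "\<dots> = (\<Sum>K\<in>?Ks. \<Sum>C\<in>packings P V (W - V K). g (insert K C))"
    by (rule sum.Sigma[symmetric]) (auto intro: finite_subset[OF _ fin] finite_packings fin_sub)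
  finally show ?thesis unfolding packings_avoiding .
qed

definition graph_edge :: "(nat \<Rightarrow> nat \<Rightarrow> bool) \<Rightarrow> nat set \<Rightarrow> bool" where
  "graph_edge E e \<longleftrightarrow> (\<exists>u v. e = {u, v} \<and> E u v)"

lemma matching_iff:
  "matching E S M \<longleftrightarrow> (\<forall>e\<in>M. graph_edge E e \<and> e \<subseteq> S) \<and> (\<forall>e1\<in>M. \<forall>e2\<in>M. e1 \<noteq> e2 \<longrightarrow> e1 \<inter> e2 = {})"
proof -
  have "(\<exists>u v. e = {u, v} \<and> u \<in> S \<and> v \<in> S \<and> E u v) \<longleftrightarrow> graph_edge E e \<and> e \<subseteq> S" for e
    unfolding graph_edge_def by blast
  then show ?thesis by (simp only: matching_def)
qed

lemma matching_subset_iff: "S \<subseteq> T \<Longrightarrow> matching E S M \<longleftrightarrow> matching E T M \<and> \<Union>M \<subseteq> S"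
  unfolding matching_iff by blast

lemma matchings_eq_packings:
  assumes "finite S"
  shows "{M. matching E S M} = packings (graph_edge E) (\<lambda>e. e) S"
proof -
  have "finite M" if "matching E S M" for M
  proof (rule finite_subset)
    show "M \<subseteq> Pow S" using that by (auto simp: matching_iff)
  qed (use assms in simp)
  then show ?thesis unfolding packings_def matching_iff by blast
qed

lemma card_Union_matching:
  assumes irr: "\<forall>u. \<not> E u u" and M: "matching E S M"
  shows "card (\<Union>M) = 2 * card M"
proof -
  have edges: "card e = 2" if "e \<in> M" for e
  proof -
    from M that have "graph_edge E e" by (simp add: matching_iff)
    then obtain u v where "e = {u, v}" "E u v" unfolding graph_edge_def by blast
    moreover from this irr have "u \<noteq> v" by blast
    ultimately show ?thesis by simp
  qed
  have "card (\<Union>M) = sum card M"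
  proof (rule card_Union_disjoint)
    show "pairwise disjnt M" using M unfolding matching_iff pairwise_def disjnt_def by blast
    show "finite e" if "e \<in> M" for e using edges[OF that] by (intro card_ge_0_finite) simp
  qed
  also have "\<dots> = sum (\<lambda>_. 2) M" using edges by (rule sum.cong[OF refl])
  finally show ?thesis by simp
qed

definition matching_weight :: "(nat set \<Rightarrow> complex) \<Rightarrow> nat set set \<Rightarrow> real" where
  "matching_weight w M = (-1) ^ card M * (\<Prod>e\<in>M. cmod (w e)) ^ 2"

lemma matching_weight_insert:
  "finite M \<Longrightarrow> e \<notin> M \<Longrightarrow> matching_weight w (insert e M) = - (cmod (w e))\<^sup>2 * matching_weight w M"
  by (simp add: matching_weight_def power_mult_distrib)

definition matching_term :: "(nat set \<Rightarrow> complex) \<Rightarrow> (nat \<Rightarrow> real) \<Rightarrow> nat set \<Rightarrow> nat set set \<Rightarrow> real poly" where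
  "matching_term w w1 T M = Polynomial.smult (matching_weight w M) (\<Prod>x\<in>T - \<Union>M. [:- w1 x, 1:])"

lemma matching_term_unmatched:
  assumes "finite T" "v \<in> T - \<Union>M"
  shows "matching_term w w1 T M = [:- w1 v, 1:] * matching_term w w1 (T - {v}) M"
proof -
  have "(\<Prod>x\<in>T - \<Union>M. [:- w1 x, 1:]) = [:- w1 v, 1:] * (\<Prod>x\<in>T - \<Union>M - {v}. [:- w1 x, 1:])"
    using assms by (intro prod.remove) auto
  moreover have "T - \<Union>M - {v} = T - {v} - \<Union>M" by blast
  ultimately show ?thesis by (simp add: matching_term_def mult_smult_right)
qed

lemma matching_term_insert:
  assumes "finite M" "e \<notin> M"
  shows "matching_term w w1 T (insert e M) = - ([:(cmod (w e))\<^sup>2:] * matching_term w w1 (T - e) M)"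
proof -
  have "T - \<Union>(insert e M) = T - e - \<Union>M" by auto
  then show ?thesis using assms
    by (simp add: matching_term_def matching_weight_insert mult_smult_left mult.commute)
qed

lemma prod_pCons_const: "finite A \<Longrightarrow> (\<Prod>x\<in>A. [:f x:]) = [:\<Prod>x\<in>A. f x:]"
  by (induction A rule: finite_induct) (auto simp: mult.commute)

text \<open>The sets \<open>S\<close> in which \<open>M\<close> is a matching are \<open>\<Union>M \<union> S'\<close> with \<open>S' \<subseteq> T - \<Union>M\<close>, and summing
  over \<open>S'\<close> is the expansion of \<open>\<Prod>x\<in>T - \<Union>M. (x - w1 x)\<close>.\<close>

lemma sum_supersets_matching:
  assumes irr: "\<forall>u. \<not> E u u" and fT: "finite T" and M: "matching E T M"
  shows "(\<Sum>S\<in>{S \<in> Pow T. matching E S M}. Polynomial.smult ((-1) ^ card (T - S) * (\<Prod>v\<in>T - S. w1 v))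
            (monom (matching_weight w M) (card S - 2 * card M)))
       = Polynomial.smult (matching_weight w M) (\<Prod>x\<in>T - \<Union>M. [:- w1 x, 1:])"
proof -
  let ?U = "\<Union>M" and ?R = "T - \<Union>M"
  let ?g = "\<lambda>S. Polynomial.smult ((-1) ^ card (T - S) * (\<Prod>v\<in>T - S. w1 v))
                 (monom (matching_weight w M) (card S - 2 * card M))"
  have UT: "?U \<subseteq> T" using M by (auto simp: matching_iff)
  have fR: "finite ?R" and fU: "finite ?U" using fT UT finite_subset by auto
  have supersets: "{S \<in> Pow T. matching E S M} = (\<lambda>S'. ?U \<union> S') ` Pow ?R"
  proof (intro equalityI subsetI)
    fix S assume "S \<in> {S \<in> Pow T. matching E S M}"
    then have "S \<subseteq> T" "?U \<subseteq> S" by (auto simp: matching_iff)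
    then show "S \<in> (\<lambda>S'. ?U \<union> S') ` Pow ?R" by (intro image_eqI[of _ _ "S - ?U"]) auto
  next
    fix S assume "S \<in> (\<lambda>S'. ?U \<union> S') ` Pow ?R"
    then show "S \<in> {S \<in> Pow T. matching E S M}" using M UT matching_subset_iff[of S T E M] by auto
  qed
  have inj: "inj_on (\<lambda>S'. ?U \<union> S') (Pow ?R)"
    unfolding inj_on_def Pow_iff by blast
  have summand: "?g (?U \<union> S') = Polynomial.smult (matching_weight w M) ((\<Prod>x\<in>S'. [:0, 1:]) * (\<Prod>x\<in>?R - S'. [:- w1 x:]))"
    if S': "S' \<subseteq> ?R" for S'
  proof -
    have "card (?U \<union> S') = card ?U + card S'"
      using S' fU finite_subset[OF S' fR] by (subst card_Un_disjoint) auto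
    then have "card (?U \<union> S') - 2 * card M = card S'"
      using card_Union_matching[OF irr M] by simp
    moreover have "T - (?U \<union> S') = ?R - S'" by auto
    moreover have "(\<Prod>x\<in>?R - S'. - w1 x) = (-1) ^ card (?R - S') * (\<Prod>x\<in>?R - S'. w1 x)"
      by (simp add: prod_uminus)
    ultimately show ?thesis using fR by (simp add: monom_altdef prod_pCons_const mult.commute)
  qed
  have "(\<Sum>S\<in>{S \<in> Pow T. matching E S M}. ?g S) = (\<Sum>S'\<in>Pow ?R. ?g (?U \<union> S'))"
    unfolding supersets sum.reindex[OF inj] by (simp add: o_def)
  also have "\<dots> = Polynomial.smult (matching_weight w M) (\<Sum>S'\<in>Pow ?R. (\<Prod>x\<in>S'. [:0, 1:]) * (\<Prod>x\<in>?R - S'. [:- w1 x:]))"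
    by (simp add: summand smult_sum2)
  also have "\<dots> = Polynomial.smult (matching_weight w M) (\<Prod>x\<in>?R. [:0, 1:] + [:- w1 x:])"
    by (simp only: prod_add[OF fR])
  also have "\<dots> = Polynomial.smult (matching_weight w M) (\<Prod>x\<in>?R. [:- w1 x, 1:])"
    by simp
  finally show ?thesis .
qed

lemma eta_eq_sum_matchings:
  assumes irr: "\<forall>u. \<not> E u u" and fT: "finite T"
  shows "eta E w w1 T = (\<Sum>M | matching E T M. matching_term w w1 T M)"
proof -
  let ?g = "\<lambda>S M. Polynomial.smult ((-1) ^ card (T - S) * (\<Prod>v\<in>T - S. w1 v))
                   (monom (matching_weight w M) (card S - 2 * card M))"
  have fin: "finite {M. matching E T M}"
    using fT by (simp add: matchings_eq_packings finite_packings)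
  have "eta E w w1 T = (\<Sum>S\<in>Pow T. \<Sum>M\<in>{M \<in> {M. matching E T M}. matching E S M}. ?g S M)"
    unfolding eta_def
  proof (rule sum.cong[OF refl])
    fix S assume "S \<in> Pow T"
    then have "{M. matching E S M} = {M \<in> {M. matching E T M}. matching E S M}"
      using matching_subset_iff[of S T E] by auto
    then show "Polynomial.smult ((-1) ^ card (T - S) * (\<Prod>v\<in>T - S. w1 v)) (mu E w S)
             = (\<Sum>M\<in>{M \<in> {M. matching E T M}. matching E S M}. ?g S M)"
      by (simp add: mu_def matching_weight_def smult_sum2)
  qed
  also have "\<dots> = (\<Sum>M | matching E T M. \<Sum>S\<in>{S \<in> Pow T. matching E S M}. ?g S M)"
    by (rule sum.swap_restrict) (use fT fin in auto)
  also have "\<dots> = (\<Sum>M | matching E T M. matching_term w w1 T M)"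
    using sum_supersets_matching[where E = E, OF irr fT] by (intro sum.cong) (auto simp: matching_term_def)
  finally show ?thesis .
qed

lemma edges_at_vertex:
  assumes sym: "\<forall>u v. E u v \<longrightarrow> E v u" and irr: "\<forall>u. \<not> E u u" and v: "v \<in> T"
  shows "{e. graph_edge E e \<and> v \<in> e \<and> e \<subseteq> T} = (\<lambda>u. {v, u}) ` {u \<in> T - {v}. E v u}"
    and "inj_on (\<lambda>u. {v, u}) {u \<in> T - {v}. E v u}"
proof -
  show "{e. graph_edge E e \<and> v \<in> e \<and> e \<subseteq> T} = (\<lambda>u. {v, u}) ` {u \<in> T - {v}. E v u}"
  proof (intro equalityI subsetI)
    fix e assume "e \<in> {e. graph_edge E e \<and> v \<in> e \<and> e \<subseteq> T}"
    then obtain a b where e: "e = {a, b}" "E a b" "v \<in> e" "e \<subseteq> T" unfolding graph_edge_def by blast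
    show "e \<in> (\<lambda>u. {v, u}) ` {u \<in> T - {v}. E v u}"
    proof (cases "a = v")
      case True
      then show ?thesis using e irr by (intro image_eqI[of _ _ b]) auto
    next
      case False
      then show ?thesis using e sym by (intro image_eqI[of _ _ a]) auto
    qed
  qed (use v in \<open>auto simp: graph_edge_def\<close>)
  show "inj_on (\<lambda>u. {v, u}) {u \<in> T - {v}. E v u}"
    by (auto simp: inj_on_def doubleton_eq_iff)
qed

text \<open>Vertex deletion for \<open>\<eta>\<close>, mirroring the row expansion of \<open>\<phi>\<close>: either \<open>v\<close> is unmatched and
  contributes the factor \<open>x - w1 v\<close>, or it is matched to a neighbour \<open>u\<close>.\<close>

lemma eta_eq_sum_packings:
  assumes "\<forall>u. \<not> E u u" "finite T"
  shows "eta E w w1 T = (\<Sum>M\<in>packings (graph_edge E) (\<lambda>e. e) T. matching_term w w1 T M)"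
  using eta_eq_sum_matchings[where E = E, OF assms] matchings_eq_packings[OF assms(2)] by simp

lemma eta_delete_vertex:
  assumes sym: "\<forall>u v. E u v \<longrightarrow> E v u" and irr: "\<forall>u. \<not> E u u"
    and fT: "finite T" and vT: "v \<in> T"
  shows "eta E w w1 T = [:- w1 v, 1:] * eta E w w1 (T - {v})
           - (\<Sum>u\<in>{u \<in> T - {v}. E v u}. [:(cmod (w {v, u}))\<^sup>2:] * eta E w w1 (T - {v} - {u}))"
proof -
  let ?pk = "packings (graph_edge E) (\<lambda>e. e)"
  have fin: "finite {e. graph_edge E e \<and> e \<subseteq> T}"
    using fT by (auto intro: finite_subset[of _ "Pow T"])
  have ne: "graph_edge E e \<Longrightarrow> e \<noteq> {}" for e by (auto simp: graph_edge_def)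
  have avoiding: "(\<Sum>M\<in>?pk (T - {v}). matching_term w w1 T M) = [:- w1 v, 1:] * eta E w w1 (T - {v})"
  proof -
    have "matching_term w w1 T M = [:- w1 v, 1:] * matching_term w w1 (T - {v}) M" if "M \<in> ?pk (T - {v})" for M
      using packingsD(3)[OF that] vT fT by (intro matching_term_unmatched) auto
    then show ?thesis using fT by (simp add: eta_eq_sum_packings[where E = E, OF irr] sum_distrib_left)
  qed
  have covering: "(\<Sum>M\<in>?pk (T - e). matching_term w w1 T (insert e M)) = - ([:(cmod (w e))\<^sup>2:] * eta E w w1 (T - e))"
    if e: "graph_edge E e" for e
  proof -
    have "e \<notin> M" "finite M" if "M \<in> ?pk (T - e)" for M
      using packingsD(1,3)[OF that] ne[OF e] by auto
    then show ?thesis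
      using fT by (simp add: eta_eq_sum_packings[where E = E, OF irr] matching_term_insert sum_distrib_left sum_negf)
  qed
  have "eta E w w1 T = (\<Sum>M\<in>?pk (T - {v}). matching_term w w1 T M)
      + (\<Sum>e | graph_edge E e \<and> v \<in> e \<and> e \<subseteq> T. \<Sum>M\<in>?pk (T - e). matching_term w w1 T (insert e M))"
    unfolding eta_eq_sum_packings[where E = E, OF irr fT] by (rule sum_packings_split[OF fin ne])
  also have "(\<Sum>e | graph_edge E e \<and> v \<in> e \<and> e \<subseteq> T. \<Sum>M\<in>?pk (T - e). matching_term w w1 T (insert e M))
      = (\<Sum>e | graph_edge E e \<and> v \<in> e \<and> e \<subseteq> T. - ([:(cmod (w e))\<^sup>2:] * eta E w w1 (T - e)))"
    by (rule sum.cong[OF refl], rule covering) simp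
  also have "\<dots> = - (\<Sum>u\<in>{u \<in> T - {v}. E v u}. [:(cmod (w {v, u}))\<^sup>2:] * eta E w w1 (T - {v} - {u}))"
  proof -
    have "T - {v, u} = T - {v} - {u}" for u by auto
    then show ?thesis
      unfolding edges_at_vertex[OF sym irr vT] sum.reindex[OF edges_at_vertex(2)[OF sym irr vT]]
      by (simp add: sum_negf)
  qed
  finally show ?thesis by (simp only: avoiding diff_conv_add_uminus)
qed

interpretation of_real_poly_hom: map_poly_comm_ring_hom "of_real :: real \<Rightarrow> complex" ..

abbreviation eta_complex :: "(nat \<Rightarrow> nat \<Rightarrow> bool) \<Rightarrow> (nat set \<Rightarrow> complex) \<Rightarrow> (nat \<Rightarrow> real) \<Rightarrow> nat set \<Rightarrow> complex poly" where
  "eta_complex E w w1 T \<equiv> map_poly complex_of_real (eta E w w1 T)"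

lemma eta_complex_delete_vertex:
  assumes "\<forall>u v. E u v \<longrightarrow> E v u" "\<forall>u. \<not> E u u" "finite T" "v \<in> T"
  shows "eta_complex E w w1 T = [:- complex_of_real (w1 v), 1:] * eta_complex E w w1 (T - {v})
     - (\<Sum>u\<in>{u \<in> T - {v}. E v u}. [:complex_of_real ((cmod (w {v, u}))\<^sup>2):] * eta_complex E w w1 (T - {v} - {u}))"
  unfolding eta_delete_vertex[OF assms] by (simp add: hom_distribs)

lemma is_cycle_nonempty: "is_cycle E K \<Longrightarrow> \<Union>K \<noteq> {}"
  unfolding is_cycle_def cycle_list_def
  by (metis Union_cycle_edges length_0_conv not_numeral_le_zero set_empty)

lemma finite_cycles_within: "finite W \<Longrightarrow> finite {K. is_cycle E K \<and> \<Union>K \<subseteq> W}"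
  by (rule finite_subset[of _ "Pow (Pow W)"]) auto

definition family_coeff :: "(nat \<Rightarrow> nat \<Rightarrow> bool) \<Rightarrow> (nat set \<Rightarrow> complex) \<Rightarrow> (nat \<Rightarrow> real) \<Rightarrow> nat set set set \<Rightarrow> complex" where
  "family_coeff E w w1 C = (-1) ^ card C * (\<Prod>K\<in>C. w2_cycle (wadj E w w1) K)"

definition family_term :: "(nat \<Rightarrow> nat \<Rightarrow> bool) \<Rightarrow> (nat set \<Rightarrow> complex) \<Rightarrow> (nat \<Rightarrow> real) \<Rightarrow> nat set \<Rightarrow> nat set set set \<Rightarrow> complex poly" where
  "family_term E w w1 W C = Polynomial.smult (family_coeff E w w1 C) (eta_complex E w w1 (W - \<Union>(\<Union>C)))"

text \<open>The right-hand side of the theorem for the subgraph induced by \<open>W\<close>; the empty family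
  contributes \<open>\<eta>(G[W], x)\<close>.\<close>

definition cycle_sum :: "(nat \<Rightarrow> nat \<Rightarrow> bool) \<Rightarrow> (nat set \<Rightarrow> complex) \<Rightarrow> (nat \<Rightarrow> real) \<Rightarrow> nat set \<Rightarrow> complex poly" where
  "cycle_sum E w w1 W = (\<Sum>C\<in>packings (is_cycle E) Union W. family_term E w w1 W C)"

lemma family_term_insert:
  assumes C: "C \<in> packings (is_cycle E) Union (W - \<Union>K)" and K: "is_cycle E K"
  shows "family_term E w w1 W (insert K C)
       = - ([:w2_cycle (wadj E w w1) K:] * family_term E w w1 (W - \<Union>K) C)"
proof -
  have "K \<notin> C" using packingsD(3)[OF C] is_cycle_nonempty[OF K] by blast
  then have "family_coeff E w w1 (insert K C) = - (w2_cycle (wadj E w w1) K * family_coeff E w w1 C)"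
    using packingsD(1)[OF C] by (simp add: family_coeff_def)
  moreover have "W - \<Union>(\<Union>(insert K C)) = W - \<Union>K - \<Union>(\<Union>C)" by blast
  ultimately show ?thesis by (simp add: family_term_def mult.commute)
qed

lemma cycle_sum_covering:
  assumes "is_cycle E K"
  shows "(\<Sum>C\<in>packings (is_cycle E) Union (W - \<Union>K). family_term E w w1 W (insert K C))
       = - ([:w2_cycle (wadj E w w1) K:] * cycle_sum E w w1 (W - \<Union>K))"
  using assms by (simp add: family_term_insert cycle_sum_def sum_distrib_left sum_negf)

lemma cycle_sum_avoiding:
  assumes sym: "\<forall>u v. E u v \<longrightarrow> E v u" and irr: "\<forall>u. \<not> E u u"
    and fW: "finite W" and vW: "v \<in> W"
  shows "(\<Sum>C\<in>packings (is_cycle E) Union (W - {v}). family_term E w w1 W C)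
       = [:- complex_of_real (w1 v), 1:] * cycle_sum E w w1 (W - {v})
         - (\<Sum>u\<in>{u \<in> W - {v}. E v u}. [:complex_of_real ((cmod (w {v, u}))\<^sup>2):] * cycle_sum E w w1 (W - {v} - {u}))"
proof -
  let ?pk = "packings (is_cycle E) Union"
  let ?N = "{u \<in> W - {v}. E v u}"
  let ?c = "\<lambda>u. [:complex_of_real ((cmod (w {v, u}))\<^sup>2):]"
  have fin: "finite (?pk W')" if "finite W'" for W'
    using that by (intro finite_packings finite_cycles_within)
  have "family_term E w w1 W C = [:- complex_of_real (w1 v), 1:] * family_term E w w1 (W - {v}) C
          - (\<Sum>u\<in>{u \<in> ?N. u \<notin> \<Union>(\<Union>C)}. ?c u * family_term E w w1 (W - {v} - {u}) C)"
    if C: "C \<in> ?pk (W - {v})" for C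
  proof -
    have "v \<in> W - \<Union>(\<Union>C)" using packingsD(3)[OF C] vW by blast
    moreover have "W - \<Union>(\<Union>C) - {v} = W - {v} - \<Union>(\<Union>C)"
      and "{u \<in> W - {v} - \<Union>(\<Union>C). E v u} = {u \<in> ?N. u \<notin> \<Union>(\<Union>C)}"
      and "\<And>u. W - {v} - \<Union>(\<Union>C) - {u} = W - {v} - {u} - \<Union>(\<Union>C)" by blast+
    ultimately show ?thesis
      using eta_complex_delete_vertex[OF sym irr, of "W - \<Union>(\<Union>C)" v w w1] fW
      by (simp add: family_term_def smult_diff_right smult_sum2 mult_smult_right)
  qed
  then have "(\<Sum>C\<in>?pk (W - {v}). family_term E w w1 W C)
      = [:- complex_of_real (w1 v), 1:] * cycle_sum E w w1 (W - {v})
        - (\<Sum>C\<in>?pk (W - {v}). \<Sum>u\<in>{u \<in> ?N. u \<notin> \<Union>(\<Union>C)}. ?c u * family_term E w w1 (W - {v} - {u}) C)"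
    by (simp add: cycle_sum_def sum_subtractf sum_distrib_left)
  also have "(\<Sum>C\<in>?pk (W - {v}). \<Sum>u\<in>{u \<in> ?N. u \<notin> \<Union>(\<Union>C)}. ?c u * family_term E w w1 (W - {v} - {u}) C)
      = (\<Sum>u\<in>?N. \<Sum>C\<in>{C \<in> ?pk (W - {v}). u \<notin> \<Union>(\<Union>C)}. ?c u * family_term E w w1 (W - {v} - {u}) C)"
    by (rule sum.swap_restrict) (use fW fin in auto)
  also have "\<dots> = (\<Sum>u\<in>?N. ?c u * cycle_sum E w w1 (W - {v} - {u}))"
    using packings_avoiding[of "is_cycle E" Union "W - {v}"]
    by (simp add: cycle_sum_def sum_distrib_left)
  finally show ?thesis .
qed

lemma cycle_sum_delete_vertex:
  assumes sym: "\<forall>u v. E u v \<longrightarrow> E v u" and irr: "\<forall>u. \<not> E u u"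
    and fW: "finite W" and vW: "v \<in> W"
  shows "cycle_sum E w w1 W = [:- complex_of_real (w1 v), 1:] * cycle_sum E w w1 (W - {v})
     - (\<Sum>u\<in>{u \<in> W - {v}. E v u}. [:complex_of_real ((cmod (w {v, u}))\<^sup>2):] * cycle_sum E w w1 (W - {v} - {u}))
     - (\<Sum>K | is_cycle E K \<and> v \<in> \<Union>K \<and> \<Union>K \<subseteq> W. [:w2_cycle (wadj E w w1) K:] * cycle_sum E w w1 (W - \<Union>K))"
proof -
  have "cycle_sum E w w1 W = (\<Sum>C\<in>packings (is_cycle E) Union (W - {v}). family_term E w w1 W C)
      + (\<Sum>K | is_cycle E K \<and> v \<in> \<Union>K \<and> \<Union>K \<subseteq> W.
           \<Sum>C\<in>packings (is_cycle E) Union (W - \<Union>K). family_term E w w1 W (insert K C))"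
    unfolding cycle_sum_def
    by (rule sum_packings_split[OF finite_cycles_within[OF fW] is_cycle_nonempty])
  then show ?thesis
    by (simp add: cycle_sum_avoiding[OF sym irr fW vW] cycle_sum_covering sum_negf)
qed

lemma prod_converse: "(\<Prod>(x, y)\<in>converse Z. g x y) = (\<Prod>(x, y)\<in>Z. g y x)"
proof -
  have e: "converse Z = (\<lambda>(x, y). (y, x)) ` Z" by auto
  have i: "inj_on (\<lambda>(x, y). (y, x)) Z" by (auto simp: inj_on_def)
  show ?thesis unfolding e prod.reindex[OF i] by (simp add: o_def case_prod_beta)
qed

lemma w2_list_conv_arcs:
  "distinct c \<Longrightarrow> w2_list b c = (\<Prod>(x, y)\<in>cycle_arcs c. b x y) + (\<Prod>(x, y)\<in>cycle_arcs c. b y x)"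
  by (simp add: w2_list_conv_cycle_prod cycle_prod_conv_arcs)

lemma w2_cycle_cycle_edges:
  assumes dc: "distinct (v # L)" and l2: "2 \<le> length L"
  shows "w2_cycle b (cycle_edges (v # L)) = cycle_prod b (v # L) + cycle_prod b (v # rev L)"
proof -
  let ?P = "\<lambda>vs. 3 \<le> length vs \<and> distinct vs \<and> cycle_edges vs = cycle_edges (v # L)"
  define d where "d = (SOME vs. ?P vs)"
  have d: "?P d" unfolding d_def by (rule someI[of ?P "v # L"]) (use dc l2 in simp)
  then have "cycle_arcs d = cycle_arcs (v # L) \<or> cycle_arcs d = converse (cycle_arcs (v # L))"
    using cycle_arcs_eq_or_converse[OF dc l2] by blast
  then have "w2_list b d = (\<Prod>(x, y)\<in>cycle_arcs (v # L). b x y) + (\<Prod>(x, y)\<in>cycle_arcs (v # L). b y x)"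
    using d by (auto simp: w2_list_conv_arcs prod_converse)
  moreover have "cycle_prod b (v # rev L) = (\<Prod>(x, y)\<in>cycle_arcs (v # L). b y x)"
    using dc by (simp add: cycle_prod_conv_arcs cycle_arcs_rev prod_converse)
  ultimately show ?thesis
    using dc by (simp add: w2_cycle_def cycle_prod_conv_arcs flip: d_def)
qed

lemma rev_neq_self:
  assumes "distinct L" "2 \<le> length L"
  shows "rev L \<noteq> L"
proof
  assume r: "rev L = L"
  have "L \<noteq> []" using assms(2) by auto
  then have "L ! 0 = L ! (length L - 1)" using r rev_nth[of 0 L] by simp
  moreover have "0 < length L" "length L - 1 < length L" "0 \<noteq> length L - 1" using assms(2) by auto
  ultimately show False using nth_eq_iff_index_eq[OF assms(1)] by metis
qed

lemma cycle_list_rotate_to_head: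
  assumes cl: "cycle_list E vs" and v: "v \<in> set vs"
  obtains L where "cycle_list E (v # L)" "cycle_edges (v # L) = cycle_edges vs" "set (v # L) = set vs"
proof -
  obtain j where j: "j < length vs" "vs ! j = v" using v by (auto simp: in_set_conv_nth)
  let ?r = "rotate j vs"
  have dv: "distinct vs" using cl by (simp add: cycle_list_def)
  have "vs \<noteq> []" using j(1) by auto
  then have "?r ! 0 = v" using j nth_rotate[of 0 vs j] by simp
  moreover have "?r \<noteq> []" using j by auto
  ultimately have r: "?r = v # tl ?r" by (metis hd_Cons_tl hd_conv_nth)
  have "cycle_list E ?r" using cl dv by (simp add: cycle_list_conv_arcs cycle_arcs_rotate)
  moreover have "cycle_edges ?r = cycle_edges vs" using dv by (rule cycle_edges_rotate)
  moreover have "set ?r = set vs" by simp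
  ultimately show ?thesis using that r by metis
qed

lemma cycle_lists_with_edges:
  assumes sym: "\<forall>u v. E u v \<longrightarrow> E v u" and L0: "cycle_list E (v # L0)"
  shows "{L. cycle_list E (v # L) \<and> cycle_edges (v # L) = cycle_edges (v # L0)} = {L0, rev L0}"
proof (intro equalityI subsetI)
  have dc: "distinct (v # L0)" and l2: "2 \<le> length L0" using L0 by (auto simp: cycle_list_def)
  fix L assume "L \<in> {L. cycle_list E (v # L) \<and> cycle_edges (v # L) = cycle_edges (v # L0)}"
  then have dL: "distinct (v # L)" and edges: "cycle_edges (v # L) = cycle_edges (v # L0)"
    by (auto simp: cycle_list_def)
  from cycle_arcs_eq_or_converse[OF dc l2 dL edges]
  show "L \<in> {L0, rev L0}"
  proof
    assume "cycle_arcs (v # L) = cycle_arcs (v # L0)"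
    then show ?thesis using cycle_arcs_inj_Cons[OF dc dL] by simp
  next
    assume "cycle_arcs (v # L) = converse (cycle_arcs (v # L0))"
    then have "cycle_arcs (v # L) = cycle_arcs (v # rev L0)" by (simp add: cycle_arcs_rev)
    then show ?thesis using cycle_arcs_inj_Cons[of v "rev L0" L] dc dL by simp
  qed
next
  fix L assume "L \<in> {L0, rev L0}"
  moreover have "cycle_list E (v # rev L0)"
    using L0 sym unfolding cycle_list_conv_arcs cycle_arcs_rev by auto
  ultimately show "L \<in> {L. cycle_list E (v # L) \<and> cycle_edges (v # L) = cycle_edges (v # L0)}"
    using L0 cycle_edges_rev[of v L0] by auto
qed

lemma cycle_prod_wadj_eq_0:
  assumes "distinct c" "3 \<le> length c" "\<not> cycle_list E c"
  shows "cycle_prod (wadj E w w1) c = 0"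
proof -
  obtain x y where xy: "(x, y) \<in> cycle_arcs c" "\<not> E x y"
    using assms by (auto simp: cycle_list_conv_arcs)
  have "x \<noteq> y" using cycle_arcs_irrefl[OF assms(1) _ xy(1)] assms(2) by simp
  then have "wadj E w w1 x y = 0" using xy(2) by (simp add: wadj_def)
  then show ?thesis unfolding cycle_prod_conv_arcs[OF assms(1)]
    using xy(1) by (intro prod_zero finite_cycle_arcs bexI[of _ "(x, y)"]) auto
qed

lemma cycles_through_vertex:
  assumes vW: "v \<in> W"
  shows "(\<lambda>L. cycle_edges (v # L)) ` {L \<in> distinct_lists (W - {v}). 2 \<le> length L \<and> cycle_list E (v # L)}
       = {K. is_cycle E K \<and> v \<in> \<Union>K \<and> \<Union>K \<subseteq> W}"
proof (intro equalityI subsetI)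
  fix K assume "K \<in> (\<lambda>L. cycle_edges (v # L)) ` {L \<in> distinct_lists (W - {v}). 2 \<le> length L \<and> cycle_list E (v # L)}"
  then obtain L where L: "L \<in> distinct_lists (W - {v})" "cycle_list E (v # L)" "K = cycle_edges (v # L)"
    by blast
  then have "is_cycle E K" unfolding is_cycle_def by blast
  moreover have "\<Union>K = set (v # L)" using L Union_cycle_edges[of "v # L"] by simp
  ultimately show "K \<in> {K. is_cycle E K \<and> v \<in> \<Union>K \<and> \<Union>K \<subseteq> W}"
    using L vW by (auto simp: distinct_lists_def)
next
  fix K assume K: "K \<in> {K. is_cycle E K \<and> v \<in> \<Union>K \<and> \<Union>K \<subseteq> W}"
  then obtain vs where vs: "cycle_list E vs" "K = cycle_edges vs" unfolding is_cycle_def by blast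
  moreover have "vs \<noteq> []" using vs(1) by (auto simp: cycle_list_def)
  ultimately have UK: "\<Union>K = set vs" using Union_cycle_edges by simp
  then obtain L where L: "cycle_list E (v # L)" "cycle_edges (v # L) = cycle_edges vs" "set (v # L) = set vs"
    using cycle_list_rotate_to_head[OF vs(1)] K by auto
  then have "L \<in> {L \<in> distinct_lists (W - {v}). 2 \<le> length L \<and> cycle_list E (v # L)}"
    using UK K by (auto simp: distinct_lists_def cycle_list_def)
  then show "K \<in> (\<lambda>L. cycle_edges (v # L)) ` {L \<in> distinct_lists (W - {v}). 2 \<le> length L \<and> cycle_list E (v # L)}"
    using L vs by blast
qed

lemma sum_traversals_of_cycle:
  fixes f :: "nat set \<Rightarrow> complex poly"
  assumes sym: "\<forall>u v. E u v \<longrightarrow> E v u"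
    and L0: "L0 \<in> {L \<in> distinct_lists (W - {v}). 2 \<le> length L \<and> cycle_list E (v # L)}"
    and K: "cycle_edges (v # L0) = K"
  shows "(\<Sum>L\<in>{L \<in> {L \<in> distinct_lists (W - {v}). 2 \<le> length L \<and> cycle_list E (v # L)}. cycle_edges (v # L) = K}.
            [:cycle_prod (wadj E w w1) (v # L):] * f (W - {v} - set L))
       = [:w2_cycle (wadj E w w1) K:] * f (W - \<Union>K)"
proof -
  let ?b = "wadj E w w1"
  let ?CL = "{L \<in> distinct_lists (W - {v}). 2 \<le> length L \<and> cycle_list E (v # L)}"
  have cl: "cycle_list E (v # L0)" and l2: "2 \<le> length L0" using L0 by simp_all
  then have dc: "distinct (v # L0)" by (simp add: cycle_list_def)
  have lists: "{L. cycle_list E (v # L) \<and> cycle_edges (v # L) = K} = {L0, rev L0}"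
    using cycle_lists_with_edges[OF sym cl] K by simp
  then have "cycle_list E (v # rev L0)" by blast
  then have "rev L0 \<in> ?CL" using L0 by (auto simp: distinct_lists_def)
  then have "{L \<in> ?CL. cycle_edges (v # L) = K} = {L0, rev L0}" using lists L0 by blast
  moreover have "rev L0 \<noteq> L0" using rev_neq_self[of L0] dc l2 by simp
  ultimately have "(\<Sum>L\<in>{L \<in> ?CL. cycle_edges (v # L) = K}. [:cycle_prod ?b (v # L):] * f (W - {v} - set L))
      = [:cycle_prod ?b (v # L0) + cycle_prod ?b (v # rev L0):] * f (W - {v} - set L0)"
    by (simp add: smult_add_left)
  also have "W - {v} - set L0 = W - \<Union>K"
    using K Union_cycle_edges[of "v # L0"] by auto
  also have "cycle_prod ?b (v # L0) + cycle_prod ?b (v # rev L0) = w2_cycle ?b K"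
    using w2_cycle_cycle_edges[OF dc l2, of ?b] K by simp
  finally show ?thesis .
qed

lemma sum_cycle_lists_eq_sum_cycles:
  fixes f :: "nat set \<Rightarrow> complex poly"
  assumes sym: "\<forall>u v. E u v \<longrightarrow> E v u" and fW: "finite W" and vW: "v \<in> W"
  shows "(\<Sum>L | L \<in> distinct_lists (W - {v}) \<and> 2 \<le> length L. [:cycle_prod (wadj E w w1) (v # L):] * f (W - {v} - set L))
       = (\<Sum>K | is_cycle E K \<and> v \<in> \<Union>K \<and> \<Union>K \<subseteq> W. [:w2_cycle (wadj E w w1) K:] * f (W - \<Union>K))"
proof -
  let ?h = "\<lambda>L. [:cycle_prod (wadj E w w1) (v # L):] * f (W - {v} - set L)"
  let ?D = "{L. L \<in> distinct_lists (W - {v}) \<and> 2 \<le> length L}"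
  let ?CL = "{L \<in> distinct_lists (W - {v}). 2 \<le> length L \<and> cycle_list E (v # L)}"
  let ?g = "\<lambda>L. cycle_edges (v # L)"
  have finD: "finite ?D" using finite_distinct_lists[of "W - {v}"] fW by (auto intro: finite_subset)
  have "(\<Sum>L\<in>?D. ?h L) = (\<Sum>L\<in>?CL. ?h L)"
  proof (rule sum.mono_neutral_right[OF finD])
    show "\<forall>L\<in>?D - ?CL. ?h L = 0"
    proof
      fix L assume "L \<in> ?D - ?CL"
      then have "distinct (v # L)" "3 \<le> length (v # L)" "\<not> cycle_list E (v # L)"
        by (auto simp: distinct_lists_def)
      then show "?h L = 0" by (simp add: cycle_prod_wadj_eq_0)
    qed
  qed auto
  also have "\<dots> = (\<Sum>K\<in>?g ` ?CL. \<Sum>L\<in>{L \<in> ?CL. ?g L = K}. ?h L)"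
    by (rule sum.image_gen) (rule finite_subset[OF _ finD], auto)
  also have "\<dots> = (\<Sum>K\<in>?g ` ?CL. [:w2_cycle (wadj E w w1) K:] * f (W - \<Union>K))"
    by (rule sum.cong[OF refl], erule imageE, rule sum_traversals_of_cycle[OF sym]) simp_all
  finally show ?thesis unfolding cycles_through_vertex[OF vW] .
qed

lemma wadj_mult_wadj_swap:
  assumes sym: "\<forall>u v. E u v \<longrightarrow> E v u" and "E v u" "v \<noteq> u"
  shows "wadj E w w1 v u * wadj E w w1 u v = complex_of_real ((cmod (w {v, u}))\<^sup>2)"
proof -
  have "E u v" "{u, v} = {v, u}" using sym assms(2) by auto
  moreover have "w {v, u} * cnj (w {v, u}) = complex_of_real ((cmod (w {v, u}))\<^sup>2)"
    by (rule complex_norm_square[symmetric])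
  ultimately show ?thesis
    using assms(2,3) by (cases "v < u") (simp_all add: wadj_def mult.commute)
qed

lemma eta_empty: "eta E w w1 {} = 1"
proof -
  have "{M. matching E {} M} = {{}}"
    by (auto simp: matching_iff graph_edge_def)
  then show ?thesis by (simp add: eta_def mu_def)
qed

lemma cycle_sum_empty: "cycle_sum E w w1 {} = 1"
  by (simp add: cycle_sum_def family_term_def family_coeff_def packings_empty[OF is_cycle_nonempty] eta_empty)

text \<open>The determinant and the cycle sum satisfy the same vertex-deletion recurrence.\<close>

lemma det_on_char_entry_eq_cycle_sum:
  assumes sym: "\<forall>u v. E u v \<longrightarrow> E v u" and irr: "\<forall>u. \<not> E u u" and "finite W"
  shows "det_on (char_entry (wadj E w w1)) W = cycle_sum E w w1 W"
  using assms(3)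
proof (induction "card W" arbitrary: W rule: less_induct)
  case less
  let ?a = "char_entry (wadj E w w1)" and ?b = "wadj E w w1"
  show ?case
  proof (cases "W = {}")
    case True
    then show ?thesis by (simp add: cycle_sum_empty)
  next
    case False
    then obtain v where vW: "v \<in> W" by blast
    note fW = less.prems
    have IH: "det_on ?a W' = cycle_sum E w w1 W'" if W': "W' \<subseteq> W - {v}" for W'
    proof (rule less.hyps)
      have "W' \<subset> W" using W' vW by blast
      then show "card W' < card W" by (rule psubset_card_mono[OF fW])
      show "finite W'" using W' fW finite_subset by blast
    qed
    have edges: "(\<Sum>u\<in>W - {v}. [:?b v u * ?b u v:] * det_on ?a (W - {v} - {u}))
        = (\<Sum>u\<in>{u \<in> W - {v}. E v u}. [:complex_of_real ((cmod (w {v, u}))\<^sup>2):] * cycle_sum E w w1 (W - {v} - {u}))"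
    proof (rule sum.mono_neutral_cong_right)
      show "\<forall>u\<in>W - {v} - {u \<in> W - {v}. E v u}. [:?b v u * ?b u v:] * det_on ?a (W - {v} - {u}) = 0"
        by (auto simp: wadj_def)
      fix u assume "u \<in> {u \<in> W - {v}. E v u}"
      then show "[:?b v u * ?b u v:] * det_on ?a (W - {v} - {u})
          = [:complex_of_real ((cmod (w {v, u}))\<^sup>2):] * cycle_sum E w w1 (W - {v} - {u})"
        using wadj_mult_wadj_swap[OF sym] IH[of "W - {v} - {u}"] by auto
    qed (use fW in auto)
    have "(\<Sum>L | L \<in> distinct_lists (W - {v}) \<and> 2 \<le> length L. [:cycle_prod ?b (v # L):] * det_on ?a (W - {v} - set L))
        = (\<Sum>L | L \<in> distinct_lists (W - {v}) \<and> 2 \<le> length L. [:cycle_prod ?b (v # L):] * cycle_sum E w w1 (W - {v} - set L))"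
      by (intro sum.cong refl arg_cong2[where f = "(*)"] IH) auto
    also have "\<dots> = (\<Sum>K | is_cycle E K \<and> v \<in> \<Union>K \<and> \<Union>K \<subseteq> W. [:w2_cycle ?b K:] * cycle_sum E w w1 (W - \<Union>K))"
      by (rule sum_cycle_lists_eq_sum_cycles[OF sym fW vW])
    finally have cycles: "(\<Sum>L | L \<in> distinct_lists (W - {v}) \<and> 2 \<le> length L. [:cycle_prod ?b (v # L):] * det_on ?a (W - {v} - set L))
        = (\<Sum>K | is_cycle E K \<and> v \<in> \<Union>K \<and> \<Union>K \<subseteq> W. [:w2_cycle ?b K:] * cycle_sum E w w1 (W - \<Union>K))" .
    have "?b v v = complex_of_real (w1 v)" by (simp add: wadj_def)
    then show ?thesis
      using det_on_char_entry_expansion[OF fW vW, of ?b] edges cycles IH[of "W - {v}"]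
      by (simp add: cycle_sum_delete_vertex[OF sym irr fW vW])
  qed
qed

lemma is_cycle_edge_nonempty: "is_cycle E K \<Longrightarrow> e \<in> K \<Longrightarrow> e \<noteq> {}"
  unfolding is_cycle_def cycle_edges_def by auto

lemma cycle_vertices_connected:
  assumes sub: "cycle_edges vs \<subseteq> F" and x: "x \<in> set vs" and u: "u \<in> set vs"
  shows "(\<lambda>a b. {a, b} \<in> F)\<^sup>*\<^sup>* x u"
proof -
  let ?R = "\<lambda>a b. {a, b} \<in> F"
  let ?m = "length vs"
  obtain i where i: "i < ?m" "x = vs ! i" using x by (auto simp: in_set_conv_nth)
  obtain j where j: "j < ?m" "u = vs ! j" using u by (auto simp: in_set_conv_nth)
  have step: "?R\<^sup>*\<^sup>* x (vs ! ((i + k) mod ?m))" for k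
  proof (induction k)
    case 0
    then show ?case using i by simp
  next
    case (Suc k)
    let ?j = "(i + k) mod ?m"
    have "?j < ?m" using i(1) by (intro mod_less_divisor) linarith
    then have "{vs ! ?j, vs ! (Suc ?j mod ?m)} \<in> cycle_edges vs" unfolding cycle_edges_def by auto
    then have "?R (vs ! ?j) (vs ! (Suc ?j mod ?m))" using sub by blast
    with Suc.IH have "?R\<^sup>*\<^sup>* x (vs ! (Suc ?j mod ?m))" by (rule rtranclp.rtrancl_into_rtrancl)
    moreover have "Suc ?j mod ?m = (i + Suc k) mod ?m" by (simp add: mod_Suc_eq)
    ultimately show ?case by simp
  qed
  have "(i + (j + ?m - i)) mod ?m = j" using i j by simp
  then show ?thesis using step[of "j + ?m - i"] j by simp
qed

context
  fixes E :: "nat \<Rightarrow> nat \<Rightarrow> bool" and C :: "nat set set set" and W :: "nat set"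
  assumes packing: "C \<in> packings (is_cycle E) Union W"
begin

lemma component_of_packing:
  assumes K: "K \<in> C" and x: "x \<in> \<Union>K"
  shows "{u. (\<lambda>a b. {a, b} \<in> \<Union>C)\<^sup>*\<^sup>* x u} = \<Union>K"
proof (intro equalityI subsetI)
  fix u assume "u \<in> {u. (\<lambda>a b. {a, b} \<in> \<Union>C)\<^sup>*\<^sup>* x u}"
  then have r: "(\<lambda>a b. {a, b} \<in> \<Union>C)\<^sup>*\<^sup>* x u" by simp
  show "u \<in> \<Union>K" using r
  proof (induction rule: rtranclp_induct)
    case base then show ?case using x .
  next
    case (step y z)
    then obtain K' where K': "K' \<in> C" "{y, z} \<in> K'" by blast
    then have "y \<in> \<Union>K'" by blast
    then have "K' = K" using step.IH packingsD(4)[OF packing K'(1) K] by blast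
    then show ?case using K' by blast
  qed
next
  fix u assume u: "u \<in> \<Union>K"
  obtain vs where vs: "cycle_list E vs" "K = cycle_edges vs" using packingsD(2)[OF packing K] unfolding is_cycle_def by blast
  have "vs \<noteq> []" using vs(1) by (auto simp: cycle_list_def)
  then have UK: "\<Union>K = set vs" using vs Union_cycle_edges by simp
  have "cycle_edges vs \<subseteq> \<Union>C" using vs K by blast
  moreover have "x \<in> set vs" "u \<in> set vs" using x u UK by auto
  ultimately have "(\<lambda>a b. {a, b} \<in> \<Union>C)\<^sup>*\<^sup>* x u" by (rule cycle_vertices_connected)
  then show "u \<in> {u. (\<lambda>a b. {a, b} \<in> \<Union>C)\<^sup>*\<^sup>* x u}" by (simp only: mem_Collect_eq)
qed

lemma components_Union_packing: "components (\<Union>C) = (\<lambda>K. \<Union>K) ` C"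
proof (intro equalityI subsetI)
  fix X assume "X \<in> components (\<Union>C)"
  then obtain x where x: "x \<in> \<Union>(\<Union>C)" "X = {u. (\<lambda>a b. {a, b} \<in> \<Union>C)\<^sup>*\<^sup>* x u}"
    unfolding components_def by blast
  then obtain K where K: "K \<in> C" "x \<in> \<Union>K" by blast
  then have "X = \<Union>K" using component_of_packing[OF K] x(2) by simp
  then show "X \<in> (\<lambda>K. \<Union>K) ` C" using K by blast
next
  fix X assume "X \<in> (\<lambda>K. \<Union>K) ` C"
  then obtain K where K: "K \<in> C" "X = \<Union>K" by blast
  then obtain x where x: "x \<in> \<Union>K" using is_cycle_nonempty packingsD(2)[OF packing] by blast
  then have "X = {u. (\<lambda>a b. {a, b} \<in> \<Union>C)\<^sup>*\<^sup>* x u}" using component_of_packing[OF K(1) x] K(2) by simp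
  moreover have "x \<in> \<Union>(\<Union>C)" using x K by blast
  ultimately show "X \<in> components (\<Union>C)" unfolding components_def by blast
qed

lemma edges_within_cycle: "K \<in> C \<Longrightarrow> {e \<in> \<Union>C. e \<subseteq> \<Union>K} = K"
proof (intro equalityI subsetI)
  fix e assume K: "K \<in> C" and "e \<in> {e \<in> \<Union>C. e \<subseteq> \<Union>K}"
  then obtain K' where K': "K' \<in> C" "e \<in> K'" "e \<subseteq> \<Union>K" by blast
  have "e \<noteq> {}" using is_cycle_edge_nonempty packingsD(2)[OF packing K'(1)] K'(2) by blast
  moreover have "e \<subseteq> \<Union>K'" using K' by blast
  ultimately have "K' = K" using packingsD(4)[OF packing K'(1) K] K' by blast
  then show "e \<in> K" using K' by simp
next
  fix e assume "K \<in> C" "e \<in> K" then show "e \<in> {e \<in> \<Union>C. e \<subseteq> \<Union>K}" by blast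
qed

lemma inj_on_Union_packing: "inj_on (\<lambda>K. \<Union>K) C"
proof (rule inj_onI)
  fix K1 K2 assume K: "K1 \<in> C" "K2 \<in> C" "\<Union>K1 = \<Union>K2"
  show "K1 = K2"
  proof (rule ccontr)
    assume "K1 \<noteq> K2"
    then have "\<Union>K1 \<inter> \<Union>K2 = {}" using packingsD(4)[OF packing] K by blast
    moreover have "\<Union>K1 \<noteq> {}" using is_cycle_nonempty[OF packingsD(2)[OF packing K(1)]] .
    ultimately show False using K(3) by simp
  qed
qed

lemma comp_Union_packing: "comp (\<Union>C) = card C"
  unfolding comp_def components_Union_packing using card_image[OF inj_on_Union_packing] .

lemma w2_Union_packing: "w2 E w w1 (\<Union>C) = (\<Prod>K\<in>C. w2_cycle (wadj E w w1) K)"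
proof -
  have "w2 E w w1 (\<Union>C) = (\<Prod>X\<in>(\<lambda>K. \<Union>K) ` C. w2_cycle (wadj E w w1) {e \<in> \<Union>C. e \<subseteq> X})"
    unfolding w2_def components_Union_packing ..
  also have "\<dots> = (\<Prod>K\<in>C. w2_cycle (wadj E w w1) {e \<in> \<Union>C. e \<subseteq> \<Union>K})"
    by (simp add: prod.reindex[OF inj_on_Union_packing])
  also have "\<dots> = (\<Prod>K\<in>C. w2_cycle (wadj E w w1) K)"
  proof (rule prod.cong[OF refl])
    fix K assume K: "K \<in> C"
    show "w2_cycle (wadj E w w1) {e \<in> \<Union>C. e \<subseteq> \<Union>K} = w2_cycle (wadj E w w1) K"
      unfolding edges_within_cycle[OF K] ..
  qed
  finally show ?thesis .
qed

lemma packing_from_components: "C = (\<lambda>X. {e \<in> \<Union>C. e \<subseteq> X}) ` components (\<Union>C)"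
  unfolding components_Union_packing image_image using edges_within_cycle by (auto simp: image_iff)

end

lemma inj_on_Union_packings: "inj_on Union (packings (is_cycle E) Union W)"
proof (rule inj_onI)
  fix C1 C2 assume C: "C1 \<in> packings (is_cycle E) Union W" "C2 \<in> packings (is_cycle E) Union W" "\<Union>C1 = \<Union>C2"
  then show "C1 = C2" using packing_from_components[OF C(1)] packing_from_components[OF C(2)] by metis
qed

lemma is_cycle_vertices_subset:
  assumes sg: "simple_graph n E" and K: "is_cycle E K"
  shows "\<Union>K \<subseteq> {1..n}"
proof -
  obtain vs where vs: "cycle_list E vs" "K = cycle_edges vs" using K unfolding is_cycle_def by blast
  have "vs \<noteq> []" using vs(1) by (auto simp: cycle_list_def)
  then have UK: "\<Union>K = set vs" using vs Union_cycle_edges by simp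
  have "set vs \<subseteq> {1..n}"
  proof
    fix x assume "x \<in> set vs"
    then obtain i where i: "i < length vs" "x = vs ! i" by (auto simp: in_set_conv_nth)
    then have "E x (vs ! ((i + 1) mod length vs))" using vs(1) by (simp add: cycle_list_def)
    then show "x \<in> {1..n}" using sg unfolding simple_graph_def by blast
  qed
  then show ?thesis using UK by simp
qed

lemma cycle_subgraphs_eq_packings:
  assumes sg: "simple_graph n E"
  shows "cycle_subgraphs E = Union ` (packings (is_cycle E) Union {1..n} - {{}})"
proof (intro equalityI subsetI)
  fix F assume "F \<in> cycle_subgraphs E"
  then obtain C where C: "finite C" "C \<noteq> {}" "\<forall>K\<in>C. is_cycle E K"
    "\<forall>K1\<in>C. \<forall>K2\<in>C. K1 \<noteq> K2 \<longrightarrow> \<Union>K1 \<inter> \<Union>K2 = {}" "F = \<Union>C"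
    unfolding cycle_subgraphs_def by blast
  have "C \<in> packings (is_cycle E) Union {1..n}"
  proof (rule packingsI)
    show "finite C" by (rule C(1))
    fix K assume K: "K \<in> C"
    show "is_cycle E K" using C(3) K by simp
    then show "\<Union>K \<subseteq> {1..n}" by (rule is_cycle_vertices_subset[OF sg])
  next
    fix K1 K2 assume "K1 \<in> C" "K2 \<in> C" "K1 \<noteq> K2"
    then show "\<Union>K1 \<inter> \<Union>K2 = {}" using C(4) by simp
  qed
  then show "F \<in> Union ` (packings (is_cycle E) Union {1..n} - {{}})" using C by blast
next
  fix F assume "F \<in> Union ` (packings (is_cycle E) Union {1..n} - {{}})"
  then obtain C where C: "C \<in> packings (is_cycle E) Union {1..n}" "C \<noteq> {}" "F = \<Union>C" by blast
  have "finite C \<and> C \<noteq> {} \<and> (\<forall>K\<in>C. is_cycle E K) \<and>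
       (\<forall>K1\<in>C. \<forall>K2\<in>C. K1 \<noteq> K2 \<longrightarrow> \<Union>K1 \<inter> \<Union>K2 = {}) \<and> F = \<Union>C"
    using C(2,3) packingsD(1,2,4)[OF C(1)] by simp
  then show "F \<in> cycle_subgraphs E" unfolding cycle_subgraphs_def mem_Collect_eq by (rule exI)
qed

lemma wadj_swap: "\<forall>u v. E u v \<longrightarrow> E v u \<Longrightarrow> wadj E w w1 y x = cnj (wadj E w w1 x y)"
  unfolding wadj_def by (auto simp: insert_commute)

lemma w2_list_wadj_real:
  assumes sym: "\<forall>u v. E u v \<longrightarrow> E v u"
  shows "w2_list (wadj E w w1) vs \<in> \<real>"
proof -
  let ?b = "wadj E w w1"
  let ?z = "\<Prod>i<length vs. ?b (vs ! i) (vs ! ((i + 1) mod length vs))"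
  have "(\<Prod>i<length vs. ?b (vs ! ((i + 1) mod length vs)) (vs ! i)) = cnj ?z"
    unfolding cnj_prod by (rule prod.cong[OF refl], rule wadj_swap[OF sym])
  then have "w2_list ?b vs = ?z + cnj ?z" unfolding w2_list_def by simp
  also have "\<dots> = complex_of_real (2 * Re ?z)" by (rule complex_add_cnj)
  finally show ?thesis by simp
qed

lemma w2_real: "\<forall>u v. E u v \<longrightarrow> E v u \<Longrightarrow> w2 E w w1 F \<in> \<real>"
  unfolding w2_def w2_cycle_def by (intro prod_in_Reals w2_list_wadj_real)

lemma cycle_sum_conv_cycle_subgraphs:
  assumes sg: "simple_graph n E"
  shows "cycle_sum E w w1 {1..n} = eta_complex E w w1 {1..n}
           + (\<Sum>F\<in>cycle_subgraphs E. Polynomial.smult ((-1) ^ comp F * w2 E w w1 F) (eta_complex E w w1 ({1..n} - \<Union>F)))"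
proof -
  let ?pk = "packings (is_cycle E) Union {1..n}"
  have fin: "finite ?pk" by (intro finite_packings finite_cycles_within) simp
  have "cycle_sum E w w1 {1..n} = family_term E w w1 {1..n} {} + (\<Sum>C\<in>?pk - {{}}. family_term E w w1 {1..n} C)"
    unfolding cycle_sum_def by (rule sum.remove[OF fin]) (auto intro: packingsI)
  also have "family_term E w w1 {1..n} {} = eta_complex E w w1 {1..n}"
    by (simp add: family_term_def family_coeff_def)
  also have "(\<Sum>C\<in>?pk - {{}}. family_term E w w1 {1..n} C)
      = (\<Sum>C\<in>?pk - {{}}. Polynomial.smult ((-1) ^ comp (\<Union>C) * w2 E w w1 (\<Union>C)) (eta_complex E w w1 ({1..n} - \<Union>(\<Union>C))))"
  proof (rule sum.cong[OF refl])
    fix C assume "C \<in> ?pk - {{}}"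
    then have C: "C \<in> ?pk" by simp
    show "family_term E w w1 {1..n} C
        = Polynomial.smult ((-1) ^ comp (\<Union>C) * w2 E w w1 (\<Union>C)) (eta_complex E w w1 ({1..n} - \<Union>(\<Union>C)))"
      unfolding comp_Union_packing[OF C] w2_Union_packing[OF C] family_term_def family_coeff_def ..
  qed
  also have "\<dots> = (\<Sum>F\<in>cycle_subgraphs E. Polynomial.smult ((-1) ^ comp F * w2 E w w1 F) (eta_complex E w w1 ({1..n} - \<Union>F)))"
    unfolding cycle_subgraphs_eq_packings[OF sg]
    by (rule sum.reindex[symmetric, unfolded o_def]) (rule inj_on_subset[OF inj_on_Union_packings], blast)
  finally show ?thesis .
qed

theorem theorem2p8:
  fixes n :: nat and E :: "nat \<Rightarrow> nat \<Rightarrow> bool"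
    and w :: "nat set \<Rightarrow> complex" and w1 :: "nat \<Rightarrow> real"
  assumes "simple_graph n E"
    and "\<forall>u v. E u v \<longrightarrow> w {u, v} \<noteq> 0"
  shows "phi n E w w1 =
           map_poly complex_of_real (eta E w w1 {1..n}) +
           (\<Sum>F\<in>cycle_subgraphs E.
              Polynomial.smult ((-1) ^ comp F * w2 E w w1 F)
                (map_poly complex_of_real (eta E w w1 ({1..n} - \<Union>F))))
         \<and> (\<forall>i. coeff (phi n E w w1) i \<in> \<real>)"
proof -
  have sym: "\<forall>u v. E u v \<longrightarrow> E v u" and irr: "\<forall>u. \<not> E u u"
    using assms(1) unfolding simple_graph_def by blast+
  have phi: "phi n E w w1 = eta_complex E w w1 {1..n}
      + (\<Sum>F\<in>cycle_subgraphs E. Polynomial.smult ((-1) ^ comp F * w2 E w w1 F) (eta_complex E w w1 ({1..n} - \<Union>F)))"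
    unfolding phi_eq_det_on det_on_char_entry_eq_cycle_sum[OF sym irr finite_atLeastAtMost]
    by (rule cycle_sum_conv_cycle_subgraphs[OF assms(1)])
  moreover have "coeff (phi n E w w1) i \<in> \<real>" for i
    unfolding phi using w2_real[OF sym] by (simp add: coeff_sum coeff_map_poly)
  ultimately show ?thesis by blast
qed

end
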